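(* Let $\mathcal H_A,\mathcal H_B$ be finite-dimensional Hilbert spaces, $|0_A\rangle\in\mathcal H_A$, $|0_B\rangle\in\mathcal H_B$ unit vectors, $|0\rangle=|0_A\rangle\otimes|0_B\rangle$, and let $|\phi\rangle\in\mathcal H_A\otimes\mathcal H_B$ be a unit vector. Decompose $|\phi\rangle=|x\rangle\otimes|0_B\rangle+|y\rangle$ with $|x\rangle=(\mathbb 1_A\otimes\langle 0_B|)|\phi\rangle$ and $(\mathbb 1_A\otimes\langle 0_B|)|y\rangle=0$, and assume $|y\rangle\neq0$. Fix $0<\epsilon<1$, let $|\psi\rangle=(|0\rangle+\epsilon|\phi\rangle)/\sqrt{\mathcal N}$ with $\mathcal N=1+\epsilon^2+2\epsilon\,\mathrm{Re}\langle0|\phi\rangle$, $\rho_A=\operatorname{tr}_B|\psi\rangle\langle\psi|$, $\mu=\epsilon^2\langle y|y\rangle/\mathcal N$ and $\omega=\operatorname{tr}_B|y\rangle\langle y|/\langle y|y\rangle$. Then for every $0<\alpha<1$, $$\mu^\alpha\operatorname{tr}\omega^\alpha\le\operatorname{tr}\rho_A^\alpha\le(1-\mu)^\alpha+\mu^\alpha\operatorname{tr}\omega^\alpha,$$ equivalently $$S_\alpha(\omega)+\frac{\alpha}{1-\alpha}\log\mu\le S_\alpha(\rho_A)\le\frac{1}{1-\alpha}\log\Big[(1-\mu)^\alpha+\mu^\alpha e^{(1-\alpha)S_\alpha(\omega)}\Big].$$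
   Context: $S_\alpha(\rho)=\frac{1}{1-\alpha}\log\operatorname{tr}\rho^\alpha$. One has $\rho_A=(1-\mu)|v\rangle\langle v|+\mu\,\omega$ with $|v\rangle=(|0_A\rangle+\epsilon|x\rangle)/\sqrt{\mathcal N(1-\mu)}$ a unit vector. *)

theory Defs
  imports "Jordan_Normal_Form.Char_Poly"
begin

text \<open>Finite-dimensional Hilbert spaces H_A = C^n, H_B = C^m, H_A (x) H_B = C^(n*m),
  with the basis vector e_i (x) e_j of the tensor product identified with e_(i*m+j).\<close>

definition cinner :: "complex vec \<Rightarrow> complex vec \<Rightarrow> complex" where
  "cinner u v = (\<Sum>i<dim_vec v. cnj (u $ i) * v $ i)"

definition vnorm2 :: "complex vec \<Rightarrow> real" where
  "vnorm2 u = Re (cinner u u)"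

definition vtensor :: "complex vec \<Rightarrow> complex vec \<Rightarrow> complex vec" where
  "vtensor u v = vec (dim_vec u * dim_vec v) (\<lambda>k. u $ (k div dim_vec v) * v $ (k mod dim_vec v))"

text \<open>(1_A (x) <b|) applied to a vector w of H_A (x) H_B, with dim H_A = n, b in H_B.\<close>
definition contract_B :: "nat \<Rightarrow> complex vec \<Rightarrow> complex vec \<Rightarrow> complex vec" where
  "contract_B n b w = vec n (\<lambda>i. \<Sum>j<dim_vec b. cnj (b $ j) * w $ (i * dim_vec b + j))"

text \<open>tr_B |u><v| for u,v in H_A (x) H_B with dim H_A = n, dim H_B = m.\<close>
definition ptrace_B_outer :: "nat \<Rightarrow> nat \<Rightarrow> complex vec \<Rightarrow> complex vec \<Rightarrow> complex mat" where
  "ptrace_B_outer n m u v = mat n n (\<lambda>(i, i'). \<Sum>j<m. u $ (i * m + j) * cnj (v $ (i' * m + j)))"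

text \<open>tr rho^alpha for a (positive semidefinite) matrix: sum of lambda^alpha over the
  eigenvalues counted with algebraic multiplicity.\<close>
definition tr_pow :: "real \<Rightarrow> complex mat \<Rightarrow> real" where
  "tr_pow \<alpha> \<rho> = (\<Sum>z \<in># proots (char_poly \<rho>). Re z powr \<alpha>)"

definition renyi :: "real \<Rightarrow> complex mat \<Rightarrow> real" where
  "renyi \<alpha> \<rho> = ln (tr_pow \<alpha> \<rho>) / (1 - \<alpha>)"

end

theory Submission
  imports Defs "Jordan_Normal_Form.Schur_Decomposition"
begin

text \<open>
  The reduced state is a rank-one update \<open>\<rho>\<^sub>A = |g\<rangle>\<langle>g| + \<mu> \<omega>\<close> of the positive matrix \<open>\<mu> \<omega>\<close>,
  with \<open>g = (|0\<^sub>A\<rangle> + \<epsilon> |x\<rangle>) / \<surd>\<N>\<close>: as \<open>y\<close> has no component along \<open>|0\<^sub>B\<rangle>\<close>, the cross terms of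
  the partial trace vanish, and comparing traces gives \<open>|g|\<^sup>2 = 1 - \<mu>\<close>. A min-max counting argument
  shows that the eigenvalues of a positive matrix and of its rank-one update interlace,
  \<open>d\<^sub>1 \<le> r\<^sub>1 \<le> d\<^sub>2 \<le> \<dots> \<le> d\<^sub>n \<le> r\<^sub>n\<close>, with \<open>\<Sum> r - \<Sum> d = |g|\<^sup>2\<close>. Since \<open>t \<mapsto> t\<^sup>\<alpha>\<close> is increasing
  and concave, \<open>\<Sum> d\<^sup>\<alpha> \<le> \<Sum> r\<^sup>\<alpha> \<le> \<Sum> d\<^sup>\<alpha> + (\<Sum> r - \<Sum> d)\<^sup>\<alpha>\<close>; the Renyi bounds follow by taking
  logarithms.
\<close>

section \<open>Concave powers of interlacing sequences\<close>

lemma powr_ge_self: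
  fixes x a :: real
  assumes "0 \<le> x" "x \<le> 1" "a \<le> 1"
  shows "x \<le> x powr a"
  using powr_mono'[OF assms(3) assms(1,2)] assms by (cases "x = 0") auto

lemma powr_add_le_add_powr:
  fixes d e a :: real
  assumes "0 \<le> d" "0 \<le> e" "0 < a" "a \<le> 1"
  shows "(d + e) powr a \<le> d powr a + e powr a"
proof (cases "d + e = 0")
  case True
  then show ?thesis using assms by simp
next
  case False
  define s where "s = d + e"
  have s: "s > 0" using False assms by (simp add: s_def)
  have "1 = d / s + e / s" using s by (simp add: s_def add_divide_distrib[symmetric])
  also have "\<dots> \<le> (d / s) powr a + (e / s) powr a"
    using assms s by (intro add_mono powr_ge_self) (auto simp: s_def)
  also have "\<dots> = (d powr a + e powr a) / s powr a"
    using assms s by (simp add: powr_divide add_divide_distrib)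
  finally show ?thesis using s by (simp add: s_def field_simps)
qed

lemma powr_increment_antimono:
  fixes s d e a :: real
  assumes "0 \<le> s" "s \<le> d" "0 \<le> e" "0 < a" "a < 1"
  shows "(d + e) powr a - d powr a \<le> (s + e) powr a - s powr a"
proof (cases "s = 0")
  case True
  then show ?thesis using powr_add_le_add_powr[of d e a] assms by simp
next
  case False
  then have s: "s > 0" using assms by simp
  let ?g = "\<lambda>x. (x + e) powr a - x powr a"
  have "?g d \<le> ?g s"
  proof (rule DERIV_nonpos_imp_nonincreasing[of s d ?g])
    fix x assume x: "s \<le> x" "x \<le> d"
    then have x0: "x > 0" and xe: "x + e > 0" using s assms by auto
    have "((\<lambda>x. (x + e) powr a) has_real_derivative a * (x + e) powr (a - 1) * 1) (at x)"
      using has_real_derivative_powr[OF xe, of a] DERIV_shift[of "\<lambda>z. z powr a"] by simp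
    then have "(?g has_real_derivative a * (x + e) powr (a - 1) * 1 - a * x powr (a - 1)) (at x)"
      by (intro DERIV_diff has_real_derivative_powr x0)
    moreover have "(x + e) powr (a - 1) \<le> x powr (a - 1)"
      using assms x0 by (intro powr_mono2') auto
    ultimately show "\<exists>y. (?g has_real_derivative y) (at x) \<and> y \<le> 0"
      using assms by (auto simp: mult_left_mono)
  qed (use assms in auto)
  then show ?thesis by simp
qed

lemma sorted_nth_le_of_count_le:
  fixes xs ys :: "'a :: linorder list"
  assumes sorted: "sorted xs" "sorted ys" and len: "length xs = n" "length ys = n"
    and count: "\<And>t. card {j. j < n \<and> t < xs ! j} \<le> card {j. j < n \<and> t < ys ! j} + k"
    and i: "i + k < n"
  shows "xs ! i \<le> ys ! (i + k)"
proof (rule ccontr)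
  assume "\<not> xs ! i \<le> ys ! (i + k)"
  then have lt: "ys ! (i + k) < xs ! i" by simp
  let ?t = "ys ! (i + k)"
  have "{i..<n} \<subseteq> {j. j < n \<and> ?t < xs ! j}"
  proof
    fix j assume "j \<in> {i..<n}"
    then have "xs ! i \<le> xs ! j" "j < n" using sorted len by (auto intro: sorted_nth_mono)
    then show "j \<in> {j. j < n \<and> ?t < xs ! j}" using lt by auto
  qed
  then have "n - i \<le> card {j. j < n \<and> ?t < xs ! j}"
    using card_mono[of "{j. j < n \<and> ?t < xs ! j}" "{i..<n}"] by simp
  also have "\<dots> \<le> card {j. j < n \<and> ?t < ys ! j} + k" by (rule count)
  also have "{j. j < n \<and> ?t < ys ! j} \<subseteq> {Suc (i + k)..<n}"
  proof
    fix j assume j: "j \<in> {j. j < n \<and> ?t < ys ! j}"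
    have "\<not> j \<le> i + k"
    proof
      assume "j \<le> i + k"
      then have "ys ! j \<le> ?t" using sorted len i by (auto intro: sorted_nth_mono)
      then show False using j by auto
    qed
    then show "j \<in> {Suc (i + k)..<n}" using j by auto
  qed
  then have "card {j. j < n \<and> ?t < ys ! j} \<le> n - Suc (i + k)"
    using card_mono[of "{Suc (i + k)..<n}" "{j. j < n \<and> ?t < ys ! j}"] by simp
  finally show False using i by simp
qed

text \<open>If \<open>D 0 \<le> R 0 \<le> D 1 \<le> R 1 \<le> \<dots>\<close>, then the partial sums of \<open>R i - D i\<close> never exceed \<open>D k\<close>,
  so by concavity each term \<open>R k powr a - D k powr a\<close> is bounded by an increment of the partial
  sums, and these increments telescope.\<close>

lemma sum_powr_interlacing_le:
  fixes D R :: "nat \<Rightarrow> real"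
  assumes D0: "\<And>i. i < n \<Longrightarrow> 0 \<le> D i"
    and DR: "\<And>i. i < n \<Longrightarrow> D i \<le> R i"
    and RD: "\<And>i. Suc i < n \<Longrightarrow> R i \<le> D (Suc i)"
    and a: "0 < a" "a < 1"
  shows "(\<Sum>i<n. R i powr a) \<le> (\<Sum>i<n. D i powr a) + ((\<Sum>i<n. R i) - (\<Sum>i<n. D i)) powr a"
proof -
  define S where "S k = (\<Sum>i<k. R i - D i)" for k
  have S_Suc: "S (Suc k) = S k + (R k - D k)" for k by (simp add: S_def)
  have S_nonneg: "0 \<le> S k" if "k \<le> n" for k
    unfolding S_def using DR that by (intro sum_nonneg) auto
  have S_le: "S k \<le> D k - D 0" if "k < n" for k
    using that
  proof (induction k)
    case (Suc k)
    then show ?case using RD[of k] by (simp add: S_Suc)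
  qed (simp add: S_def)
  have step: "R k powr a - D k powr a \<le> S (Suc k) powr a - S k powr a" if k: "k < n" for k
    using powr_increment_antimono[of "S k" "D k" "R k - D k" a] S_nonneg[of k] S_le[OF k]
      D0[of 0] DR[OF k] a k by (simp add: S_Suc)
  have "(\<Sum>i<n. R i powr a) - (\<Sum>i<n. D i powr a) = (\<Sum>i<n. R i powr a - D i powr a)"
    by (simp add: sum_subtractf)
  also have "\<dots> \<le> (\<Sum>i<n. S (Suc i) powr a - S i powr a)"
    using step by (intro sum_mono) auto
  also have "\<dots> = S n powr a - S 0 powr a" by (rule sum_lessThan_telescope)
  finally show ?thesis by (simp add: S_def sum_subtractf)
qed

lemma sum_nth_sort_map:
  "(\<Sum>i<n. f (sort (map d [0..<n]) ! i)) = (\<Sum>i<n. f (d i))"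
proof -
  have "(\<Sum>i<n. f (sort (map d [0..<n]) ! i)) = sum_list (map f (sort (map d [0..<n])))"
    by (simp add: sum_list_sum_nth atLeast0LessThan)
  also have "\<dots> = sum_list (map f (map d [0..<n]))"
    by (metis mset_map mset_sort sum_mset_sum_list)
  finally show ?thesis by (simp add: sum_list_sum_nth atLeast0LessThan)
qed

lemma card_nth_sort_map:
  "card {j. j < n \<and> P (sort (map d [0..<n]) ! j)} = card {j. j < n \<and> P (d j)}"
proof -
  have "card {j. j < n \<and> P (sort (map d [0..<n]) ! j)} = length (filter P (sort (map d [0..<n])))"
    by (simp add: length_filter_conv_card)
  also have "\<dots> = length (filter P (map d [0..<n]))"
    by (metis mset_filter mset_sort size_mset)
  also have "\<dots> = card {j. j < n \<and> P (map d [0..<n] ! j)}"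
    by (simp add: length_filter_conv_card)
  also have "{j. j < n \<and> P (map d [0..<n] ! j)} = {j. j < n \<and> P (d j)}"
    by auto
  finally show ?thesis .
qed

text \<open>The counting hypotheses say that, sorted increasingly, \<open>d\<close> and \<open>r\<close> interlace.\<close>

lemma sum_powr_bounds_of_counts:
  fixes d r :: "nat \<Rightarrow> real"
  assumes d0: "\<And>i. i < n \<Longrightarrow> 0 \<le> d i"
    and count_le: "\<And>t. card {i. i < n \<and> t < d i} \<le> card {i. i < n \<and> t < r i}"
    and count_le_Suc: "\<And>t. card {i. i < n \<and> t < r i} \<le> card {i. i < n \<and> t < d i} + 1"
    and a: "0 < a" "a < 1"
  shows "(\<Sum>i<n. d i powr a) \<le> (\<Sum>i<n. r i powr a)"
    and "(\<Sum>i<n. r i powr a) \<le> (\<Sum>i<n. d i powr a) + ((\<Sum>i<n. r i) - (\<Sum>i<n. d i)) powr a"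
proof -
  define ds where "ds = sort (map d [0..<n])"
  define rs where "rs = sort (map r [0..<n])"
  have sorted: "sorted ds" "sorted rs" "length ds = n" "length rs = n"
    by (auto simp: ds_def rs_def)
  have sum_ds: "(\<Sum>i<n. f (ds ! i)) = (\<Sum>i<n. f (d i))"
    and sum_rs: "(\<Sum>i<n. f (rs ! i)) = (\<Sum>i<n. f (r i))" for f :: "real \<Rightarrow> real"
    unfolding ds_def rs_def by (rule sum_nth_sort_map)+
  have count_ds: "card {j. j < n \<and> t < ds ! j} \<le> card {j. j < n \<and> t < rs ! j} + 0" for t
    unfolding ds_def rs_def card_nth_sort_map[where P = "\<lambda>x. t < x"] using count_le by simp
  have le: "ds ! i \<le> rs ! i" if "i < n" for i
    using sorted_nth_le_of_count_le[OF sorted count_ds, of i] that by simp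
  have count_rs: "card {j. j < n \<and> t < rs ! j} \<le> card {j. j < n \<and> t < ds ! j} + 1" for t
    unfolding ds_def rs_def card_nth_sort_map[where P = "\<lambda>x. t < x"] by (rule count_le_Suc)
  have le_Suc: "rs ! i \<le> ds ! Suc i" if "Suc i < n" for i
    using sorted_nth_le_of_count_le[OF sorted(2,1,4,3) count_rs, of i] that by simp
  have nonneg: "0 \<le> ds ! i" if "i < n" for i
  proof -
    have "ds ! i \<in> set ds" using sorted(3) that by simp
    then show ?thesis using d0 by (auto simp: ds_def)
  qed
  have "(\<Sum>i<n. ds ! i powr a) \<le> (\<Sum>i<n. rs ! i powr a)"
    using le nonneg a by (intro sum_mono powr_mono2) auto
  then show "(\<Sum>i<n. d i powr a) \<le> (\<Sum>i<n. r i powr a)"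
    by (simp only: sum_ds[of "\<lambda>x. x powr a"] sum_rs[of "\<lambda>x. x powr a"])
  have "(\<Sum>i<n. rs ! i powr a) \<le> (\<Sum>i<n. ds ! i powr a) + ((\<Sum>i<n. rs ! i) - (\<Sum>i<n. ds ! i)) powr a"
    using sum_powr_interlacing_le[of n "\<lambda>i. ds ! i" "\<lambda>i. rs ! i" a] nonneg le le_Suc a by auto
  then show "(\<Sum>i<n. r i powr a) \<le> (\<Sum>i<n. d i powr a) + ((\<Sum>i<n. r i) - (\<Sum>i<n. d i)) powr a"
    using sum_ds[of "\<lambda>x. x powr a"] sum_rs[of "\<lambda>x. x powr a"] sum_ds[of "\<lambda>x. x"] sum_rs[of "\<lambda>x. x"]
    by simp
qed

definition mat_adj :: "complex mat \<Rightarrow> complex mat" where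
  "mat_adj A = mat (dim_col A) (dim_row A) (\<lambda>(i, j). cnj (A $$ (j, i)))"

definition unitary :: "nat \<Rightarrow> complex mat \<Rightarrow> bool" where
  "unitary n U \<longleftrightarrow> U \<in> carrier_mat n n \<and> mat_adj U * U = 1\<^sub>m n \<and> U * mat_adj U = 1\<^sub>m n"

abbreviation real_diag_mat :: "nat \<Rightarrow> (nat \<Rightarrow> real) \<Rightarrow> complex mat" where
  "real_diag_mat n x \<equiv> mat_diag n (\<lambda>i. complex_of_real (x i))"

definition spectral_decomp :: "nat \<Rightarrow> complex mat \<Rightarrow> complex mat \<Rightarrow> (nat \<Rightarrow> real) \<Rightarrow> bool" where
  "spectral_decomp n A U x \<longleftrightarrow> unitary n U \<and> A = U * real_diag_mat n x * mat_adj U"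

lemma mat_adj_carrier [simp]: "A \<in> carrier_mat n m \<Longrightarrow> mat_adj A \<in> carrier_mat m n"
  and dim_row_mat_adj [simp]: "dim_row (mat_adj A) = dim_col A"
  and dim_col_mat_adj [simp]: "dim_col (mat_adj A) = dim_row A"
  by (auto simp: mat_adj_def)

lemma index_mat_adj [simp]: "i < dim_col A \<Longrightarrow> j < dim_row A \<Longrightarrow> mat_adj A $$ (i, j) = cnj (A $$ (j, i))"
  by (simp add: mat_adj_def)

lemma mat_adj_mat_adj [simp]: "mat_adj (mat_adj A) = A"
  by (rule eq_matI) (auto simp: mat_adj_def)

lemma index_mult_mat_sum:
  assumes "A \<in> carrier_mat n k" "B \<in> carrier_mat k m" "i < n" "j < m"
  shows "(A * B) $$ (i, j) = (\<Sum>l<k. A $$ (i, l) * B $$ (l, j))"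
  using assms by (simp add: scalar_prod_def atLeast0LessThan)

lemma mat_adj_mult:
  assumes A: "A \<in> carrier_mat n k" and B: "B \<in> carrier_mat k m"
  shows "mat_adj (A * B) = mat_adj B * mat_adj A"
proof (rule eq_matI)
  fix i j assume "i < dim_row (mat_adj B * mat_adj A)" "j < dim_col (mat_adj B * mat_adj A)"
  then have i: "i < m" and j: "j < n" using A B by auto
  have "mat_adj (A * B) $$ (i, j) = cnj ((A * B) $$ (j, i))" using A B i j by simp
  also have "\<dots> = cnj (\<Sum>l<k. A $$ (j, l) * B $$ (l, i))"
    using A B i j by (subst index_mult_mat_sum[OF A B]) auto
  also have "\<dots> = (\<Sum>l<k. mat_adj B $$ (i, l) * mat_adj A $$ (l, j))"
    using A B i j by (simp add: mult.commute)
  also have "\<dots> = (mat_adj B * mat_adj A) $$ (i, j)"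
    using A B i j by (subst index_mult_mat_sum[of _ m k _ n]) auto
  finally show "mat_adj (A * B) $$ (i, j) = (mat_adj B * mat_adj A) $$ (i, j)" .
qed (use A B in auto)

lemma cinner_commute: "dim_vec u = dim_vec w \<Longrightarrow> cinner u w = cnj (cinner w u)"
  by (simp add: cinner_def mult.commute)

lemma cinner_smult_right: "cinner u (c \<cdot>\<^sub>v w) = c * cinner u w"
  by (simp add: cinner_def sum_distrib_left algebra_simps)

lemma cinner_smult_left: "dim_vec u = dim_vec w \<Longrightarrow> cinner (c \<cdot>\<^sub>v u) w = cnj c * cinner u w"
  by (simp add: cinner_def sum_distrib_left algebra_simps)

lemma cinner_add_right: "dim_vec v = dim_vec w \<Longrightarrow> cinner u (v + w) = cinner u v + cinner u w"
  by (simp add: cinner_def sum.distrib algebra_simps)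

lemma cinner_add_left:
  "dim_vec u = dim_vec w \<Longrightarrow> dim_vec v = dim_vec w \<Longrightarrow> cinner (u + v) w = cinner u w + cinner v w"
  by (simp add: cinner_def sum.distrib algebra_simps)

lemma cinner_self_eq_sum: "cinner u u = complex_of_real (\<Sum>i<dim_vec u. (cmod (u $ i))\<^sup>2)"
  unfolding cinner_def by (simp add: complex_mult_cnj cmod_def mult.commute)

lemma vnorm2_eq_sum: "vnorm2 u = (\<Sum>i<dim_vec u. (cmod (u $ i))\<^sup>2)"
  by (simp add: vnorm2_def cinner_self_eq_sum)

lemma cinner_self: "cinner u u = complex_of_real (vnorm2 u)"
  by (simp add: vnorm2_eq_sum cinner_self_eq_sum)

lemma vnorm2_nonneg: "0 \<le> vnorm2 u"
  by (simp add: vnorm2_eq_sum sum_nonneg)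

lemma vnorm2_eq_0_iff: "u \<in> carrier_vec n \<Longrightarrow> vnorm2 u = 0 \<longleftrightarrow> u = 0\<^sub>v n"
  by (auto simp: vnorm2_eq_sum sum_nonneg_eq_0_iff intro!: eq_vecI)

lemma vnorm2_smult: "vnorm2 (c \<cdot>\<^sub>v u) = (cmod c)\<^sup>2 * vnorm2 u"
  by (simp add: vnorm2_eq_sum norm_mult power_mult_distrib sum_distrib_left)

lemma conjugate_sprod_eq_cinner: "dim_vec u = dim_vec w \<Longrightarrow> w \<bullet>c u = cinner u w"
  by (simp add: scalar_prod_def cinner_def atLeast0LessThan mult.commute)

lemma cinner_mult_mat_vec:
  assumes A: "A \<in> carrier_mat n k" and u: "u \<in> carrier_vec n" and w: "w \<in> carrier_vec k"
  shows "cinner u (A *\<^sub>v w) = cinner (mat_adj A *\<^sub>v u) w"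
proof -
  have "cinner u (A *\<^sub>v w) = (\<Sum>i<n. \<Sum>j<k. cnj (u $ i) * A $$ (i, j) * w $ j)"
    using A u w by (simp add: cinner_def scalar_prod_def atLeast0LessThan sum_distrib_left mult.assoc)
  also have "\<dots> = (\<Sum>j<k. \<Sum>i<n. cnj (u $ i) * A $$ (i, j) * w $ j)"
    by (rule sum.swap)
  also have "\<dots> = (\<Sum>j<k. cnj (\<Sum>i<n. cnj (A $$ (i, j)) * u $ i) * w $ j)"
    by (simp add: sum_distrib_left sum_distrib_right mult_ac)
  also have "\<dots> = cinner (mat_adj A *\<^sub>v u) w"
    using A u w by (simp add: cinner_def scalar_prod_def atLeast0LessThan)
  finally show ?thesis .
qed

lemma index_mat_adj_mult_cinner:
  assumes "B \<in> carrier_mat k n" "C \<in> carrier_mat k m" "i < n" "j < m"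
  shows "(mat_adj B * C) $$ (i, j) = cinner (col B i) (col C j)"
  using assms by (subst index_mult_mat_sum[of _ n k _ m]) (auto simp: cinner_def)

lemma unitaryI_left:
  assumes "U \<in> carrier_mat n n" "mat_adj U * U = 1\<^sub>m n"
  shows "unitary n U"
  using assms mat_mult_left_right_inverse[of "mat_adj U" n U] by (simp add: unitary_def)

lemma unitary_cinner_cols:
  assumes "unitary n U" "i < n" "j < n"
  shows "cinner (col U i) (col U j) = (if i = j then 1 else 0)"
  using assms index_mat_adj_mult_cinner[of U n n U n i j] by (simp add: unitary_def)

lemma unitary_mult:
  assumes W: "unitary n W" and E: "unitary n E"
  shows "unitary n (W * E)"
proof -
  have [simp]: "W \<in> carrier_mat n n" "E \<in> carrier_mat n n" using W E by (auto simp: unitary_def)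
  then have WE: "W * E \<in> carrier_mat n n" by (intro mult_carrier_mat[of W n n E n])
  have "mat_adj (W * E) * (W * E) = (mat_adj E * mat_adj W) * (W * E)"
    by (simp add: mat_adj_mult[of W n n E n])
  also have "\<dots> = mat_adj E * (mat_adj W * (W * E))"
    by (rule assoc_mult_mat[of _ n n _ n _ n]) (simp_all add: WE)
  also have "mat_adj W * (W * E) = (mat_adj W * W) * E"
    by (simp add: assoc_mult_mat[of _ n n _ n _ n])
  finally have "mat_adj (W * E) * (W * E) = 1\<^sub>m n"
    using W E left_mult_one_mat[of E n n] by (simp add: unitary_def)
  then show ?thesis by (rule unitaryI_left[OF WE])
qed

lemma unitary_normalized_cols:
  assumes ws: "\<And>i. i < n \<Longrightarrow> ws i \<in> carrier_vec n"
    and orth: "\<And>i j. i < n \<Longrightarrow> j < n \<Longrightarrow> cinner (ws i) (ws j) = 0 \<longleftrightarrow> i \<noteq> j"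
  defines "W \<equiv> mat n n (\<lambda>(k, i). ws i $ k / complex_of_real (sqrt (vnorm2 (ws i))))"
  shows "unitary n W"
    and "\<And>i. i < n \<Longrightarrow> col W i = (1 / complex_of_real (sqrt (vnorm2 (ws i)))) \<cdot>\<^sub>v ws i"
proof -
  have Wc: "W \<in> carrier_mat n n" by (simp add: W_def)
  show colW: "col W i = (1 / complex_of_real (sqrt (vnorm2 (ws i)))) \<cdot>\<^sub>v ws i" if "i < n" for i
    using ws[OF that] that by (intro eq_vecI) (auto simp: W_def)
  have pos: "0 < vnorm2 (ws i)" if "i < n" for i
    using orth[OF that that] vnorm2_nonneg[of "ws i"] by (simp add: cinner_self less_le)
  have "mat_adj W * W = 1\<^sub>m n"
  proof (rule eq_matI)
    fix i j assume "i < dim_row (1\<^sub>m n)" "j < dim_col (1\<^sub>m n)"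
    then have ij: "i < n" "j < n" by auto
    have "(mat_adj W * W) $$ (i, j) = cinner (col W i) (col W j)"
      using Wc ij by (intro index_mat_adj_mult_cinner) auto
    also have "\<dots> = cnj (1 / complex_of_real (sqrt (vnorm2 (ws i))))
        * (1 / complex_of_real (sqrt (vnorm2 (ws j)))) * cinner (ws i) (ws j)"
      using ij ws[OF ij(1)] ws[OF ij(2)] by (simp add: colW cinner_smult_left cinner_smult_right)
    also have "\<dots> = 1\<^sub>m n $$ (i, j)"
      using ij orth[OF ij] pos[OF ij(1)]
      by (cases "i = j") (simp_all add: cinner_self of_real_mult[symmetric] del: of_real_mult)
    finally show "(mat_adj W * W) $$ (i, j) = 1\<^sub>m n $$ (i, j)" .
  qed (use Wc in auto)
  then show "unitary n W" by (rule unitaryI_left[OF Wc])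
qed

lemma exists_unitary_first_col:
  assumes v: "v \<in> carrier_vec n" and v0: "v \<noteq> 0\<^sub>v n"
  shows "\<exists>W c. unitary n W \<and> col W 0 = c \<cdot>\<^sub>v v"
proof -
  interpret cof_vec_space n "TYPE(complex)" .
  have n: "0 < n" using v v0 by (auto intro!: eq_vecI)
  define b where "b = basis_completion v"
  from basis_completion[OF v v0, folded b_def]
  have dist_b: "distinct b" and indep: "\<not> lin_dep (set b)" and b: "set b \<subseteq> carrier_vec n"
    and hdb: "hd b = v" and len_b: "length b = n" by auto
  from hdb len_b n obtain vs where bv: "b = v # vs" by (cases b) auto
  define ws where "ws = gram_schmidt n b"
  from gram_schmidt_result[OF b dist_b indep refl, folded ws_def]
  have ws: "set ws \<subseteq> carrier_vec n" "corthogonal ws" "length ws = n"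
    by (auto simp: len_b)
  from gram_schmidt_hd[OF v, of vs, folded bv] have ws0: "ws ! 0 = v"
    using ws(3) n unfolding ws_def[symmetric] by (cases ws) auto
  have wsc: "ws ! i \<in> carrier_vec n" if "i < n" for i using ws that by auto
  have "cinner (ws ! i) (ws ! j) = 0 \<longleftrightarrow> i \<noteq> j" if "i < n" "j < n" for i j
    using ws that wsc[OF that(1)] wsc[OF that(2)]
    by (auto simp: corthogonal_def conjugate_sprod_eq_cinner[symmetric])
  from unitary_normalized_cols[of n "(!) ws", OF wsc this] n ws0
  show ?thesis by blast
qed

section \<open>Spectral theorem for Hermitian matrices\<close>

lemma mult_carrier_mat_square [simp]:
  "A \<in> carrier_mat n n \<Longrightarrow> B \<in> carrier_mat n n \<Longrightarrow> A * B \<in> carrier_mat n n"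
  by (rule mult_carrier_mat)

lemma hermitian_index:
  assumes "A \<in> carrier_mat n n" "mat_adj A = A" "i < n" "j < n"
  shows "A $$ (i, j) = cnj (A $$ (j, i))"
  using index_mat_adj[of i A j] assms by simp

lemma unitary_cols_sum:
  assumes U: "unitary n U" and ij: "i < n" "j < n"
  shows "(\<Sum>k<n. cnj (U $$ (k, i)) * U $$ (k, j)) = (if i = j then 1 else 0)"
proof -
  have "(\<Sum>k<n. cnj (U $$ (k, i)) * U $$ (k, j)) = cinner (col U i) (col U j)"
    using U ij by (auto simp: cinner_def unitary_def intro!: sum.cong)
  then show ?thesis using unitary_cinner_cols[OF assms] by simp
qed

lemma index_unitary_diag_mult_adj:
  assumes U: "U \<in> carrier_mat n n" and ij: "i < n" "j < n"
  shows "(U * real_diag_mat n x * mat_adj U) $$ (i, j) = (\<Sum>k<n. U $$ (i, k) * x k * cnj (U $$ (j, k)))"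
proof -
  have UD: "U * real_diag_mat n x = mat n n (\<lambda>(i, k). U $$ (i, k) * x k)"
    by (rule mat_diag_mult_right[OF U])
  show ?thesis
    unfolding UD using U ij by (subst index_mult_mat_sum[of _ n n _ n]) auto
qed

lemma exists_eigenvector:
  fixes A :: "complex mat"
  assumes A: "A \<in> carrier_mat (Suc n) (Suc n)"
  shows "\<exists>e v. v \<in> carrier_vec (Suc n) \<and> v \<noteq> 0\<^sub>v (Suc n) \<and> A *\<^sub>v v = e \<cdot>\<^sub>v v"
proof -
  obtain as where cp: "char_poly A = (\<Prod>a\<leftarrow>as. [:- a, 1:])" and "length as = Suc n"
    using char_poly_factorized[OF A] by blast
  then obtain e rest where "as = e # rest" by (cases as) auto
  then have "eigenvalue A e" using eigenvalue_root_char_poly[OF A] cp by simp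
  then have "eigenvector A (find_eigenvector A e) e" by (rule find_eigenvector[OF A])
  then show ?thesis using A unfolding eigenvector_def by auto
qed

lemma hermitian_eigenvalue_real:
  assumes A: "A \<in> carrier_mat n n" "mat_adj A = A"
    and v: "v \<in> carrier_vec n" "v \<noteq> 0\<^sub>v n" and Av: "A *\<^sub>v v = e \<cdot>\<^sub>v v"
  shows "e = complex_of_real (Re e)"
proof -
  have "e * cinner v v = cinner v (A *\<^sub>v v)" using Av by (simp add: cinner_smult_right)
  also have "\<dots> = cinner (A *\<^sub>v v) v" using cinner_mult_mat_vec[OF A(1) v(1) v(1)] A(2) by simp
  also have "\<dots> = cnj e * cinner v v" using Av v(1) A(1) by (simp add: cinner_smult_left)
  finally have "e = cnj e" using v vnorm2_eq_0_iff[OF v(1)] by (simp add: cinner_self)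
  then show ?thesis by (simp add: complex_eq_iff)
qed

lemma index_mat_adj_mult_mult:
  assumes W: "W \<in> carrier_mat n n" and A: "A \<in> carrier_mat n n" and ij: "i < n" "j < n"
  shows "(mat_adj W * A * W) $$ (i, j) = cinner (col W i) (A *\<^sub>v col W j)"
proof -
  have "mat_adj W * A * W = mat_adj W * (A * W)" using W A by (intro assoc_mult_mat) auto
  then show ?thesis
    using index_mat_adj_mult_cinner[OF W mult_carrier_mat[OF A W] ij] col_mult2[OF A W ij(2)] by simp
qed

lemma hermitian_unitary_conj:
  assumes A: "A \<in> carrier_mat n n" "mat_adj A = A" and W: "W \<in> carrier_mat n n"
  shows "mat_adj (mat_adj W * A * W) = mat_adj W * A * W"
  using A W by (simp add: mat_adj_mult[of _ n n _ n] assoc_mult_mat[of _ n n _ n _ n])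

lemma unitary_conj_eigenvector_first_col:
  assumes A: "A \<in> carrier_mat n n" "mat_adj A = A" and W: "unitary n W"
    and eig: "A *\<^sub>v col W 0 = complex_of_real e \<cdot>\<^sub>v col W 0" and i: "i < n"
  shows "(mat_adj W * A * W) $$ (i, 0) = (if i = 0 then complex_of_real e else 0)"
    and "(mat_adj W * A * W) $$ (0, i) = (if i = 0 then complex_of_real e else 0)"
proof -
  have Wc: "W \<in> carrier_mat n n" using W by (simp add: unitary_def)
  have n: "0 < n" using i by simp
  show col0: "(mat_adj W * A * W) $$ (i, 0) = (if i = 0 then complex_of_real e else 0)"
    using index_mat_adj_mult_mult[OF Wc A(1) i n] unitary_cinner_cols[OF W i n]
    by (simp add: eig cinner_smult_right)
  define M where "M = mat_adj W * A * W"
  have M: "M \<in> carrier_mat n n" "mat_adj M = M"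
    using A Wc hermitian_unitary_conj[OF A Wc] by (simp_all add: M_def)
  have "M $$ (0, i) = cnj (M $$ (i, 0))"
    using arg_cong[OF M(2), of "\<lambda>M. M $$ (0, i)"] M(1) i n by simp
  then show "(mat_adj W * A * W) $$ (0, i) = (if i = 0 then complex_of_real e else 0)"
    using col0 by (simp add: M_def)
qed

definition lower_block :: "nat \<Rightarrow> complex mat \<Rightarrow> complex mat" where
  "lower_block n A = mat n n (\<lambda>(i, j). A $$ (Suc i, Suc j))"

definition one_block_diag :: "nat \<Rightarrow> complex mat \<Rightarrow> complex mat" where
  "one_block_diag n V = mat (Suc n) (Suc n)
     (\<lambda>(i, j). if i = 0 \<or> j = 0 then (if i = j then 1 else 0) else V $$ (i - 1, j - 1))"

lemma lower_block_carrier: "lower_block n A \<in> carrier_mat n n"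
  by (simp add: lower_block_def)

lemma hermitian_lower_block:
  assumes A: "A \<in> carrier_mat (Suc n) (Suc n)" "mat_adj A = A"
  shows "mat_adj (lower_block n A) = lower_block n A"
proof (rule eq_matI)
  fix i j assume "i < dim_row (lower_block n A)" "j < dim_col (lower_block n A)"
  then show "mat_adj (lower_block n A) $$ (i, j) = lower_block n A $$ (i, j)"
    using hermitian_index[OF A, of "Suc i" "Suc j"] by (simp add: lower_block_def)
qed (simp_all add: lower_block_def)

lemma one_block_diag_carrier: "one_block_diag n V \<in> carrier_mat (Suc n) (Suc n)"
  by (simp add: one_block_diag_def)

lemma index_one_block_diag:
  "j < Suc n \<Longrightarrow> one_block_diag n V $$ (0, j) = (if j = 0 then 1 else 0)"
  "j < Suc n \<Longrightarrow> one_block_diag n V $$ (j, 0) = (if j = 0 then 1 else 0)"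
  "i < n \<Longrightarrow> j < n \<Longrightarrow> one_block_diag n V $$ (Suc i, Suc j) = V $$ (i, j)"
  by (auto simp: one_block_diag_def)

lemma unitary_one_block_diag:
  assumes V: "unitary n V"
  shows "unitary (Suc n) (one_block_diag n V)"
proof (rule unitaryI_left[OF one_block_diag_carrier], rule eq_matI)
  let ?E = "one_block_diag n V"
  fix i j assume "i < dim_row (1\<^sub>m (Suc n))" "j < dim_col (1\<^sub>m (Suc n))"
  then have ij: "i < Suc n" "j < Suc n" by auto
  have Ec: "?E \<in> carrier_mat (Suc n) (Suc n)" by (rule one_block_diag_carrier)
  have "(mat_adj ?E * ?E) $$ (i, j) = (\<Sum>k<Suc n. cnj (?E $$ (k, i)) * ?E $$ (k, j))"
    using index_mat_adj_mult_cinner[OF Ec Ec ij] Ec ij by (simp add: cinner_def del: sum.lessThan_Suc)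
  also have "\<dots> = cnj (?E $$ (0, i)) * ?E $$ (0, j) + (\<Sum>k<n. cnj (?E $$ (Suc k, i)) * ?E $$ (Suc k, j))"
    by (rule sum.lessThan_Suc_shift)
  also have "\<dots> = 1\<^sub>m (Suc n) $$ (i, j)"
  proof (cases i; cases j)
    fix i' j' assume i: "i = Suc i'" and j: "j = Suc j'"
    have "(\<Sum>k<n. cnj (?E $$ (Suc k, i)) * ?E $$ (Suc k, j)) = (\<Sum>k<n. cnj (V $$ (k, i')) * V $$ (k, j'))"
      using ij by (intro sum.cong) (simp_all add: i j index_one_block_diag)
    then show ?thesis using ij unitary_cols_sum[OF V, of i' j'] by (simp add: i j index_one_block_diag)
  qed (use ij in \<open>simp_all add: one_block_diag_def\<close>)
  finally show "(mat_adj ?E * ?E) $$ (i, j) = 1\<^sub>m (Suc n) $$ (i, j)" .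
qed (simp_all add: one_block_diag_def)

lemma spectral_decomp_one_block_diag:
  assumes A: "A \<in> carrier_mat (Suc n) (Suc n)"
    and col0: "\<And>i. i < Suc n \<Longrightarrow> A $$ (i, 0) = (if i = 0 then complex_of_real e else 0)"
    and row0: "\<And>j. j < Suc n \<Longrightarrow> A $$ (0, j) = (if j = 0 then complex_of_real e else 0)"
    and B: "spectral_decomp n (lower_block n A) V y"
  shows "spectral_decomp (Suc n) A (one_block_diag n V) (case_nat e y)"
proof -
  let ?E = "one_block_diag n V" and ?x = "case_nat e y"
  have V: "unitary n V" and Vc: "V \<in> carrier_mat n n"
    and BV: "lower_block n A = V * real_diag_mat n y * mat_adj V"
    using B by (auto simp: spectral_decomp_def unitary_def)
  have Ec: "?E \<in> carrier_mat (Suc n) (Suc n)" by (rule one_block_diag_carrier)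
  have "A = ?E * real_diag_mat (Suc n) ?x * mat_adj ?E"
  proof (rule eq_matI)
    fix i j assume "i < dim_row (?E * real_diag_mat (Suc n) ?x * mat_adj ?E)"
      "j < dim_col (?E * real_diag_mat (Suc n) ?x * mat_adj ?E)"
    then have ij: "i < Suc n" "j < Suc n" using Ec by auto
    have "(?E * real_diag_mat (Suc n) ?x * mat_adj ?E) $$ (i, j)
        = ?E $$ (i, 0) * ?x 0 * cnj (?E $$ (j, 0))
          + (\<Sum>k<n. ?E $$ (i, Suc k) * ?x (Suc k) * cnj (?E $$ (j, Suc k)))"
      unfolding index_unitary_diag_mult_adj[OF Ec ij] by (rule sum.lessThan_Suc_shift)
    also have "\<dots> = A $$ (i, j)"
    proof (cases i; cases j)
      fix i' j' assume i: "i = Suc i'" and j: "j = Suc j'"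
      have "(\<Sum>k<n. ?E $$ (i, Suc k) * ?x (Suc k) * cnj (?E $$ (j, Suc k)))
          = (\<Sum>k<n. V $$ (i', k) * y k * cnj (V $$ (j', k)))"
        using ij by (intro sum.cong) (simp_all add: i j index_one_block_diag)
      also have "\<dots> = A $$ (i, j)"
        using ij arg_cong[OF BV, of "\<lambda>M. M $$ (i', j')"]
        by (simp add: i j lower_block_def index_unitary_diag_mult_adj[OF Vc])
      finally show ?thesis using ij by (simp add: i j index_one_block_diag)
    qed (use ij col0 row0 in \<open>simp_all add: one_block_diag_def\<close>)
    finally show "A $$ (i, j) = (?E * real_diag_mat (Suc n) ?x * mat_adj ?E) $$ (i, j)" by (rule sym)
  qed (use A Ec in auto)
  with unitary_one_block_diag[OF V] show ?thesis by (simp add: spectral_decomp_def)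
qed

lemma spectral_decomp_unitary_conj:
  assumes A: "spectral_decomp n A E x" and W: "unitary n W"
  shows "spectral_decomp n (W * A * mat_adj W) (W * E) x"
proof -
  have [simp]: "W \<in> carrier_mat n n" "E \<in> carrier_mat n n"
    using A W by (auto simp: spectral_decomp_def unitary_def)
  note [simp] = assoc_mult_mat[of _ n n _ n _ n]
  have "W * A * mat_adj W = W * E * real_diag_mat n x * mat_adj (W * E)"
    using A by (simp add: spectral_decomp_def mat_adj_mult[of _ n n _ n])
  then show ?thesis
    using unitary_mult[OF W] A by (simp add: spectral_decomp_def)
qed

theorem hermitian_spectral_decomp:
  assumes "A \<in> carrier_mat n n" "mat_adj A = A"
  shows "\<exists>U x. spectral_decomp n A U x"
  using assms
proof (induction n arbitrary: A)
  case 0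
  then have "spectral_decomp 0 A (1\<^sub>m 0) (\<lambda>_. 0)"
    by (auto simp: spectral_decomp_def unitary_def intro!: eq_matI)
  then show ?case by blast
next
  case (Suc n)
  note A = Suc.prems
  obtain e v where v: "v \<in> carrier_vec (Suc n)" "v \<noteq> 0\<^sub>v (Suc n)" and Av: "A *\<^sub>v v = e \<cdot>\<^sub>v v"
    using exists_eigenvector[OF A(1)] by blast
  have e: "e = complex_of_real (Re e)" by (rule hermitian_eigenvalue_real[OF A v Av])
  obtain W c where W: "unitary (Suc n) W" and W0: "col W 0 = c \<cdot>\<^sub>v v"
    using exists_unitary_first_col[OF v] by blast
  have Wc: "W \<in> carrier_mat (Suc n) (Suc n)" using W by (simp add: unitary_def)
  have eig: "A *\<^sub>v col W 0 = complex_of_real (Re e) \<cdot>\<^sub>v col W 0"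
    using A(1) v(1) Av e by (simp add: W0 mult_mat_vec smult_smult_assoc mult.commute)
  define A' where "A' = mat_adj W * A * W"
  have A': "A' \<in> carrier_mat (Suc n) (Suc n)"
    using A(1) Wc by (simp add: A'_def)
  have herm: "mat_adj A' = A'" unfolding A'_def by (rule hermitian_unitary_conj[OF A Wc])
  obtain V y where V: "spectral_decomp n (lower_block n A') V y"
    using Suc.IH[OF lower_block_carrier hermitian_lower_block[OF A' herm]] by blast
  have "A' $$ (i, 0) = (if i = 0 then complex_of_real (Re e) else 0)"
    and "A' $$ (0, i) = (if i = 0 then complex_of_real (Re e) else 0)" if "i < Suc n" for i
    using unitary_conj_eigenvector_first_col[OF A W eig that] by (simp_all add: A'_def)
  then have "spectral_decomp (Suc n) A' (one_block_diag n V) (case_nat (Re e) y)"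
    by (intro spectral_decomp_one_block_diag[OF A' _ _ V])
  then have "spectral_decomp (Suc n) (W * A' * mat_adj W) (W * one_block_diag n V) (case_nat (Re e) y)"
    by (rule spectral_decomp_unitary_conj[OF _ W])
  moreover have "W * A' * mat_adj W = A"
  proof -
    have "W * A' * mat_adj W = (W * mat_adj W) * A * (W * mat_adj W)"
      using A(1) Wc by (simp add: A'_def assoc_mult_mat[of _ "Suc n" "Suc n" _ "Suc n" _ "Suc n"])
    then show ?thesis using W A(1) by (simp add: unitary_def)
  qed
  ultimately show ?case by blast
qed

section \<open>Counting eigenvalues above a threshold\<close>

lemma exists_nonzero_solution_homogeneous:
  fixes f :: "'i \<Rightarrow> 'j \<Rightarrow> complex"
  assumes "finite I" "finite J" "card I < card J"
  shows "\<exists>c. (\<exists>j\<in>J. c j \<noteq> 0) \<and> (\<forall>i\<in>I. (\<Sum>j\<in>J. f i j * c j) = 0)"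
  using assms
proof (induction I arbitrary: J f rule: finite_induct)
  case empty
  then obtain j where "j \<in> J" by fastforce
  then show ?case by (intro exI[of _ "\<lambda>_. 1"]) auto
next
  case (insert i I)
  show ?case
  proof (cases "\<forall>j\<in>J. f i j = 0")
    case True
    have "card I < card J" using insert by simp
    from insert.IH[OF insert.prems(1) this, of f] obtain c where
      c: "\<exists>j\<in>J. c j \<noteq> 0" "\<forall>i\<in>I. (\<Sum>j\<in>J. f i j * c j) = 0" by blast
    then show ?thesis using True by (intro exI[of _ c]) auto
  next
    case False
    then obtain j0 where j0: "j0 \<in> J" "f i j0 \<noteq> 0" by blast
    let ?J = "J - {j0}"
    define g where "g i' j = f i' j - f i' j0 * f i j / f i j0" for i' j
    have "card I < card ?J" using insert j0 by (simp add: card_Diff_singleton)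
    from insert.IH[OF _ this, of g] insert.prems obtain c where
      c: "\<exists>j\<in>?J. c j \<noteq> 0" "\<forall>i\<in>I. (\<Sum>j\<in>?J. g i j * c j) = 0" by auto
    define c' where "c' = c(j0 := - (\<Sum>j\<in>?J. f i j * c j) / f i j0)"
    have split: "(\<Sum>j\<in>J. h j * c' j) = h j0 * c' j0 + (\<Sum>j\<in>?J. h j * c j)" for h
    proof -
      have "(\<Sum>j\<in>J. h j * c' j) = h j0 * c' j0 + (\<Sum>j\<in>?J. h j * c' j)"
        using j0 insert.prems by (simp add: sum.remove)
      also have "(\<Sum>j\<in>?J. h j * c' j) = (\<Sum>j\<in>?J. h j * c j)"
        by (intro sum.cong) (auto simp: c'_def)
      finally show ?thesis .
    qed
    have eqi: "(\<Sum>j\<in>J. f i j * c' j) = 0"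
      unfolding split using j0 by (simp add: c'_def)
    have eqI: "(\<Sum>j\<in>J. f i' j * c' j) = 0" if i': "i' \<in> I" for i'
    proof -
      have "(\<Sum>j\<in>J. f i' j * c' j) = f i' j0 * c' j0 + (\<Sum>j\<in>?J. f i' j * c j)" by (rule split)
      also have "f i' j0 * c' j0 = (\<Sum>j\<in>?J. - (f i' j0 * f i j / f i j0) * c j)"
        by (simp add: c'_def sum_distrib_left sum_divide_distrib sum_negf algebra_simps)
      also have "\<dots> + (\<Sum>j\<in>?J. f i' j * c j) = (\<Sum>j\<in>?J. g i' j * c j)"
        by (simp add: g_def sum.distrib[symmetric] algebra_simps)
      also have "\<dots> = 0" using c i' by auto
      finally show ?thesis .
    qed
    have nz: "\<exists>j\<in>J. c' j \<noteq> 0" using c(1) by (auto simp: c'_def)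
    show ?thesis using eqi eqI nz by (intro exI[of _ c']) auto
  qed
qed

lemma mult_mat_vec_carrier_square [simp]:
  "A \<in> carrier_mat n n \<Longrightarrow> v \<in> carrier_vec n \<Longrightarrow> A *\<^sub>v v \<in> carrier_vec n"
  by (rule mult_mat_vec_carrier)

lemma index_mat_adj_mult_vec:
  assumes "U \<in> carrier_mat n n" "v \<in> carrier_vec n" "k < n"
  shows "(mat_adj U *\<^sub>v v) $ k = cinner (col U k) v"
  using assms by (simp add: scalar_prod_def cinner_def atLeast0LessThan)

lemma cinner_real_diag_mat:
  assumes z: "z \<in> carrier_vec n"
  shows "cinner z (real_diag_mat n x *\<^sub>v z) = complex_of_real (\<Sum>k<n. x k * (cmod (z $ k))\<^sup>2)"
proof -
  have "real_diag_mat n x *\<^sub>v z = vec n (\<lambda>k. complex_of_real (x k) * z $ k)"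
    using z by (intro eq_vecI) (auto simp: mat_diag_def scalar_prod_def sum.remove[of _ "_"])
  then have "cinner z (real_diag_mat n x *\<^sub>v z) = (\<Sum>k<n. cnj (z $ k) * (complex_of_real (x k) * z $ k))"
    using z by (simp add: cinner_def)
  also have "\<dots> = (\<Sum>k<n. complex_of_real (x k * (cmod (z $ k))\<^sup>2))"
    by (intro sum.cong refl) (simp add: complex_mult_cnj mult_ac cmod_def)
  finally show ?thesis by simp
qed

lemma unitary_coords:
  assumes U: "unitary n U" and v: "v \<in> carrier_vec n"
  obtains c where "c \<in> carrier_vec n" "v = U *\<^sub>v c" "\<And>k. k < n \<Longrightarrow> c $ k = cinner (col U k) v"
proof
  have Uc: "U \<in> carrier_mat n n" using U by (simp add: unitary_def)
  show "mat_adj U *\<^sub>v v \<in> carrier_vec n" using Uc v by simp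
  show "v = U *\<^sub>v (mat_adj U *\<^sub>v v)"
    using U v by (simp add: unitary_def assoc_mult_mat_vec[of _ n n _ n, symmetric])
  show "(mat_adj U *\<^sub>v v) $ k = cinner (col U k) v" if "k < n" for k
    by (rule index_mat_adj_mult_vec[OF Uc v that])
qed

lemma vnorm2_unitary_mult:
  assumes U: "unitary n U" and c: "c \<in> carrier_vec n"
  shows "vnorm2 (U *\<^sub>v c) = vnorm2 c"
proof -
  have Uc: "U \<in> carrier_mat n n" using U by (simp add: unitary_def)
  have "cinner (U *\<^sub>v c) (U *\<^sub>v c) = cinner (mat_adj U *\<^sub>v (U *\<^sub>v c)) c"
    using cinner_mult_mat_vec[OF Uc _ c, of "U *\<^sub>v c"] Uc c by simp
  also have "mat_adj U *\<^sub>v (U *\<^sub>v c) = c"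
    using U c by (simp add: unitary_def assoc_mult_mat_vec[of _ n n _ n, symmetric])
  finally show ?thesis by (simp add: vnorm2_def)
qed

lemma cinner_mult_mat_vec_cols:
  assumes U: "U \<in> carrier_mat n n" and c: "c \<in> carrier_vec n" and g: "g \<in> carrier_vec n"
  shows "cinner g (U *\<^sub>v c) = (\<Sum>j<n. cinner g (col U j) * c $ j)"
proof -
  have "cinner g (U *\<^sub>v c) = (\<Sum>i<n. \<Sum>j<n. cnj (g $ i) * U $$ (i, j) * c $ j)"
    using assms by (simp add: cinner_def scalar_prod_def atLeast0LessThan sum_distrib_left mult.assoc)
  also have "\<dots> = (\<Sum>j<n. \<Sum>i<n. cnj (g $ i) * U $$ (i, j) * c $ j)" by (rule sum.swap)
  also have "\<dots> = (\<Sum>j<n. cinner g (col U j) * c $ j)"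
    using assms by (simp add: cinner_def sum_distrib_right)
  finally show ?thesis .
qed

lemma Re_cinner_spectral_mult:
  assumes A: "spectral_decomp n A U x" and c: "c \<in> carrier_vec n"
  shows "Re (cinner (U *\<^sub>v c) (A *\<^sub>v (U *\<^sub>v c))) = (\<Sum>k<n. x k * (cmod (c $ k))\<^sup>2)"
proof -
  have U: "unitary n U" and Uc: "U \<in> carrier_mat n n"
    and AU: "A = U * real_diag_mat n x * mat_adj U"
    using A by (auto simp: spectral_decomp_def unitary_def)
  have UU: "mat_adj U *\<^sub>v (U *\<^sub>v c) = c"
    using U c by (simp add: unitary_def assoc_mult_mat_vec[of _ n n _ n, symmetric])
  have "A *\<^sub>v (U *\<^sub>v c) = U *\<^sub>v (real_diag_mat n x *\<^sub>v c)"
    using Uc c by (simp add: AU UU assoc_mult_mat_vec[of _ n n _ n])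
  then have "cinner (U *\<^sub>v c) (A *\<^sub>v (U *\<^sub>v c)) = cinner c (real_diag_mat n x *\<^sub>v c)"
    using cinner_mult_mat_vec[OF Uc _ mult_mat_vec_carrier[OF mat_diag_dim c], of "U *\<^sub>v c"] Uc c
    by (simp add: UU)
  then show ?thesis by (simp add: cinner_real_diag_mat[OF c])
qed

lemma Re_cinner_le_of_orthogonal:
  assumes A: "spectral_decomp n A U x" and v: "v \<in> carrier_vec n"
    and orth: "\<And>k. k < n \<Longrightarrow> t < x k \<Longrightarrow> cinner (col U k) v = 0"
  shows "Re (cinner v (A *\<^sub>v v)) \<le> t * vnorm2 v"
proof -
  have U: "unitary n U" using A by (simp add: spectral_decomp_def)
  obtain c where c: "c \<in> carrier_vec n" "v = U *\<^sub>v c" and ck: "\<And>k. k < n \<Longrightarrow> c $ k = cinner (col U k) v"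
    using unitary_coords[OF U v] by blast
  have "Re (cinner v (A *\<^sub>v v)) = (\<Sum>k<n. x k * (cmod (c $ k))\<^sup>2)"
    unfolding c(2) by (rule Re_cinner_spectral_mult[OF A c(1)])
  also have "\<dots> \<le> (\<Sum>k<n. t * (cmod (c $ k))\<^sup>2)"
  proof (intro sum_mono)
    fix k assume k: "k \<in> {..<n}"
    show "x k * (cmod (c $ k))\<^sup>2 \<le> t * (cmod (c $ k))\<^sup>2"
    proof (cases "t < x k")
      case True
      then show ?thesis using orth ck k by simp
    next
      case False
      then show ?thesis by (intro mult_right_mono) auto
    qed
  qed
  also have "\<dots> = t * vnorm2 v"
    using c vnorm2_unitary_mult[OF U c(1)] by (simp add: vnorm2_eq_sum sum_distrib_left)
  finally show ?thesis .
qed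

lemma exists_orthogonal_Re_cinner_gt:
  assumes A: "spectral_decomp n A U x" and I: "finite I" and g: "\<And>i. i \<in> I \<Longrightarrow> g i \<in> carrier_vec n"
    and card: "card I < card {j. j < n \<and> t < x j}"
  shows "\<exists>v\<in>carrier_vec n. t * vnorm2 v < Re (cinner v (A *\<^sub>v v)) \<and> (\<forall>i\<in>I. cinner (g i) v = 0)"
proof -
  define J where "J = {j. j < n \<and> t < x j}"
  have J: "finite J" "J \<subseteq> {..<n}" by (auto simp: J_def)
  have U: "unitary n U" and Uc: "U \<in> carrier_mat n n" using A by (auto simp: spectral_decomp_def unitary_def)
  obtain c where c: "\<exists>j\<in>J. c j \<noteq> 0"
    and ceq: "\<forall>i\<in>I. (\<Sum>j\<in>J. cinner (g i) (col U j) * c j) = 0"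
    using exists_nonzero_solution_homogeneous[OF I J(1) card[folded J_def],
        of "\<lambda>i j. cinner (g i) (col U j)"] by blast
  define cv where "cv = vec n (\<lambda>j. if j \<in> J then c j else 0)"
  have cv: "cv \<in> carrier_vec n" by (simp add: cv_def)
  define v where "v = U *\<^sub>v cv"
  have v: "v \<in> carrier_vec n" using Uc cv by (simp add: v_def)
  have "cinner (g i) v = 0" if i: "i \<in> I" for i
  proof -
    have "cinner (g i) v = (\<Sum>j<n. cinner (g i) (col U j) * cv $ j)"
      unfolding v_def by (rule cinner_mult_mat_vec_cols[OF Uc cv g[OF i]])
    also have "\<dots> = (\<Sum>j<n. if j \<in> J then cinner (g i) (col U j) * c j else 0)"
      by (intro sum.cong) (auto simp: cv_def)
    also have "\<dots> = (\<Sum>j\<in>J. cinner (g i) (col U j) * c j)"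
      using J by (simp add: sum.If_cases Int_absorb1)
    finally show ?thesis using ceq i by simp
  qed
  moreover have "t * vnorm2 v < Re (cinner v (A *\<^sub>v v))"
  proof -
    obtain j0 where j0: "j0 \<in> J" "c j0 \<noteq> 0" using c by blast
    have "0 < (\<Sum>k<n. (x k - t) * (cmod (cv $ k))\<^sup>2)"
      using j0 J by (intro sum_pos2[of _ j0]) (auto simp: cv_def J_def)
    then show ?thesis
      using Re_cinner_spectral_mult[OF A cv] vnorm2_unitary_mult[OF U cv] cv
      by (simp add: v_def vnorm2_eq_sum algebra_simps sum_subtractf sum_distrib_left)
  qed
  ultimately show ?thesis using v by blast
qed

text \<open>Min-max argument: otherwise, by a dimension count, some \<open>v\<close> in the span of the eigenvectors
  of \<open>A\<close> above \<open>t\<close> is orthogonal both to the \<open>g k\<close> and to the eigenvectors of \<open>B\<close> above \<open>t\<close>,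
  and its Rayleigh quotient is \<open>> t\<close> for \<open>A\<close> but \<open>\<le> t\<close> for \<open>B\<close>.\<close>

lemma card_eigenvalues_gt_le:
  assumes A: "spectral_decomp n A U a" and B: "spectral_decomp n B V b"
    and K: "finite K" and g: "\<And>k. k \<in> K \<Longrightarrow> g k \<in> carrier_vec n"
    and le: "\<And>v. v \<in> carrier_vec n \<Longrightarrow> (\<forall>k\<in>K. cinner (g k) v = 0) \<Longrightarrow>
      Re (cinner v (A *\<^sub>v v)) \<le> Re (cinner v (B *\<^sub>v v))"
  shows "card {i. i < n \<and> t < a i} \<le> card {i. i < n \<and> t < b i} + card K"
proof (rule ccontr)
  define J where "J = {i. i < n \<and> t < b i}"
  define h where "h = case_sum g (col V)"
  assume "\<not> ?thesis"
  then have "card (K <+> J) < card {i. i < n \<and> t < a i}"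
    using K by (simp add: card_Plus J_def)
  moreover have "h i \<in> carrier_vec n" if "i \<in> K <+> J" for i
    using that g B by (auto simp: h_def J_def spectral_decomp_def unitary_def)
  ultimately obtain v where v: "v \<in> carrier_vec n" and gt: "t * vnorm2 v < Re (cinner v (A *\<^sub>v v))"
    and orth: "\<forall>i\<in>K <+> J. cinner (h i) v = 0"
    using exists_orthogonal_Re_cinner_gt[OF A, of "K <+> J" h t] K by (auto simp: J_def)
  have "Re (cinner v (B *\<^sub>v v)) \<le> t * vnorm2 v"
  proof (rule Re_cinner_le_of_orthogonal[OF B v])
    fix k assume "k < n" "t < b k"
    then have "Inr k \<in> K <+> J" by (auto simp: J_def)
    from bspec[OF orth this] show "cinner (col V k) v = 0" by (simp add: h_def)
  qed
  moreover have "Re (cinner v (A *\<^sub>v v)) \<le> Re (cinner v (B *\<^sub>v v))"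
  proof (rule le[OF v], intro ballI)
    fix k assume "k \<in> K"
    then have "Inl k \<in> K <+> J" by auto
    from bspec[OF orth this] show "cinner (g k) v = 0" by (simp add: h_def)
  qed
  ultimately show False using gt by simp
qed

definition mat_trace :: "'a :: comm_monoid_add mat \<Rightarrow> 'a" where
  "mat_trace A = (\<Sum>i<dim_row A. A $$ (i, i))"

lemma proots_prod_list_linear: "proots (\<Prod>a\<leftarrow>as. [:- a, 1:]) = mset (as :: complex list)"
proof (induction as)
  case (Cons a as)
  have "(\<Prod>a\<leftarrow>as. [:- a, 1:]) \<noteq> 0" by (auto simp: prod_list_zero_iff)
  then have "proots ([:- a, 1:] * (\<Prod>a\<leftarrow>as. [:- a, 1:])) = proots [:- a, 1:] + proots (\<Prod>a\<leftarrow>as. [:- a, 1:])"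
    by (intro proots_mult) auto
  then show ?case using Cons proots_linear_factor[of "- a"] by simp
qed simp

lemma tr_pow_spectral:
  assumes "spectral_decomp n A U x"
  shows "tr_pow \<alpha> A = (\<Sum>i<n. x i powr \<alpha>)"
proof -
  have U: "U \<in> carrier_mat n n" "mat_adj U * U = 1\<^sub>m n" "U * mat_adj U = 1\<^sub>m n"
    and AU: "A = U * real_diag_mat n x * mat_adj U"
    using assms by (auto simp: spectral_decomp_def unitary_def)
  have "similar_mat_wit A (real_diag_mat n x) U (mat_adj U)"
    using U AU by (auto simp: similar_mat_wit_def Let_def)
  then have "char_poly A = char_poly (real_diag_mat n x)"
    by (intro char_poly_similar) (auto simp: similar_mat_def)
  also have "\<dots> = (\<Prod>a\<leftarrow>diag_mat (real_diag_mat n x). [:- a, 1:])"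
    by (rule char_poly_upper_triangular[OF mat_diag_dim]) (auto simp: upper_triangular_def mat_diag_def)
  also have "diag_mat (real_diag_mat n x) = map (\<lambda>i. complex_of_real (x i)) [0..<n]"
    by (auto simp: diag_mat_def mat_diag_def)
  finally have "proots (char_poly A) = mset (map (\<lambda>i. complex_of_real (x i)) [0..<n])"
    by (simp only: proots_prod_list_linear)
  then show ?thesis
    by (simp add: tr_pow_def sum_mset_sum_list sum_list_sum_nth atLeast0LessThan flip: mset_map)
qed

lemma mat_trace_spectral:
  assumes A: "spectral_decomp n A U x"
  shows "mat_trace A = complex_of_real (\<Sum>k<n. x k)"
proof -
  have U: "unitary n U" and Uc: "U \<in> carrier_mat n n" and AU: "A = U * real_diag_mat n x * mat_adj U"
    using A by (auto simp: spectral_decomp_def unitary_def)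
  have "mat_trace A = (\<Sum>i<n. \<Sum>k<n. U $$ (i, k) * x k * cnj (U $$ (i, k)))"
    unfolding mat_trace_def AU using Uc
    by (intro sum.cong) (auto simp: index_unitary_diag_mult_adj simp del: index_mult_mat(1))
  also have "\<dots> = (\<Sum>k<n. complex_of_real (x k) * (\<Sum>i<n. cnj (U $$ (i, k)) * U $$ (i, k)))"
    by (subst sum.swap) (simp add: sum_distrib_left mult_ac)
  also have "\<dots> = (\<Sum>k<n. complex_of_real (x k))"
    using unitary_cols_sum[OF U] by simp
  finally show ?thesis by simp
qed

lemma spectral_decomp_nonneg:
  assumes A: "spectral_decomp n A U x"
    and psd: "\<And>v. v \<in> carrier_vec n \<Longrightarrow> 0 \<le> Re (cinner v (A *\<^sub>v v))" and k: "k < n"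
  shows "0 \<le> x k"
proof -
  have U: "U \<in> carrier_mat n n" using A by (simp add: spectral_decomp_def unitary_def)
  have "Re (cinner (U *\<^sub>v unit_vec n k) (A *\<^sub>v (U *\<^sub>v unit_vec n k))) = (\<Sum>j<n. x j * (cmod (unit_vec n k $ j))\<^sup>2)"
    by (rule Re_cinner_spectral_mult[OF A unit_vec_carrier])
  also have "\<dots> = (\<Sum>j<n. if j = k then x k else 0)"
    by (intro sum.cong) (auto simp: unit_vec_def)
  also have "\<dots> = x k" using k by simp
  finally show ?thesis using psd[of "U *\<^sub>v unit_vec n k"] U by simp
qed

lemma spectral_decomp_smult:
  assumes A: "spectral_decomp n A U x"
  shows "spectral_decomp n (complex_of_real c \<cdot>\<^sub>m A) U (\<lambda>i. c * x i)"
proof -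
  have U: "unitary n U" and Uc: "U \<in> carrier_mat n n" and AU: "A = U * real_diag_mat n x * mat_adj U"
    using A by (auto simp: spectral_decomp_def unitary_def)
  have "complex_of_real c \<cdot>\<^sub>m A = U * real_diag_mat n (\<lambda>i. c * x i) * mat_adj U"
  proof (rule eq_matI)
    fix i j assume "i < dim_row (U * real_diag_mat n (\<lambda>i. c * x i) * mat_adj U)"
      "j < dim_col (U * real_diag_mat n (\<lambda>i. c * x i) * mat_adj U)"
    then have ij: "i < n" "j < n" using Uc by auto
    show "(complex_of_real c \<cdot>\<^sub>m A) $$ (i, j) = (U * real_diag_mat n (\<lambda>i. c * x i) * mat_adj U) $$ (i, j)"
      unfolding index_unitary_diag_mult_adj[OF Uc ij] using Uc ij
      by (simp add: AU index_unitary_diag_mult_adj[OF Uc ij] sum_distrib_left mult_ac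
          del: index_mult_mat(1))
  qed (use Uc in \<open>simp_all add: AU\<close>)
  with U show ?thesis by (simp add: spectral_decomp_def)
qed

lemma tr_pow_smult:
  assumes A: "spectral_decomp n A U x" and x: "\<And>k. k < n \<Longrightarrow> 0 \<le> x k" and c: "0 \<le> c"
  shows "tr_pow \<alpha> (complex_of_real c \<cdot>\<^sub>m A) = c powr \<alpha> * tr_pow \<alpha> A"
  using x c by (simp add: tr_pow_spectral[OF spectral_decomp_smult[OF A]] tr_pow_spectral[OF A]
      powr_mult sum_distrib_left)

definition ketbra :: "complex vec \<Rightarrow> complex mat" where
  "ketbra g = mat (dim_vec g) (dim_vec g) (\<lambda>(i, j). g $ i * cnj (g $ j))"

lemma ketbra_carrier [simp]: "g \<in> carrier_vec n \<Longrightarrow> ketbra g \<in> carrier_mat n n"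
  by (simp add: ketbra_def)

lemma index_ketbra [simp]:
  "i < dim_vec g \<Longrightarrow> j < dim_vec g \<Longrightarrow> ketbra g $$ (i, j) = g $ i * cnj (g $ j)"
  by (simp add: ketbra_def)

lemma mat_adj_ketbra: "mat_adj (ketbra g) = ketbra g"
  by (rule eq_matI) (auto simp: ketbra_def)

lemma ketbra_smult: "ketbra (c \<cdot>\<^sub>v a) = (c * cnj c) \<cdot>\<^sub>m ketbra a"
  by (rule eq_matI) (auto simp: ketbra_def)

lemma mat_trace_ketbra: "mat_trace (ketbra g) = complex_of_real (vnorm2 g)"
  by (simp add: mat_trace_def ketbra_def cinner_self[symmetric] cinner_def mult.commute)

lemma cinner_ketbra_mult:
  assumes g: "g \<in> carrier_vec n" and v: "v \<in> carrier_vec n"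
  shows "cinner v (ketbra g *\<^sub>v v) = cinner v g * cinner g v"
proof -
  have "ketbra g *\<^sub>v v = cinner g v \<cdot>\<^sub>v g"
    using g v by (intro eq_vecI) (auto simp: ketbra_def scalar_prod_def cinner_def atLeast0LessThan
        sum_distrib_left mult_ac)
  then show ?thesis by (simp add: cinner_smult_right mult.commute)
qed

lemma Re_cinner_ketbra_mult:
  assumes g: "g \<in> carrier_vec n" and v: "v \<in> carrier_vec n"
  shows "Re (cinner v (ketbra g *\<^sub>v v)) = (cmod (cinner g v))\<^sup>2"
  using g v cmod_power2[of "cinner g v"]
  by (simp add: cinner_ketbra_mult cinner_commute[of v g] complex_mult_cnj power2_eq_square)

lemma mat_trace_add:
  "A \<in> carrier_mat n n \<Longrightarrow> B \<in> carrier_mat n n \<Longrightarrow> mat_trace (A + B) = mat_trace A + mat_trace B"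
  by (auto simp: mat_trace_def sum.distrib[symmetric] intro!: sum.cong)

lemma mat_trace_smult:
  fixes A :: "'a :: comm_semiring_0 mat"
  assumes "A \<in> carrier_mat n n"
  shows "mat_trace (c \<cdot>\<^sub>m A) = c * mat_trace A"
proof -
  have "mat_trace (c \<cdot>\<^sub>m A) = (\<Sum>i<n. c * A $$ (i, i))"
    using assms by (simp add: mat_trace_def)
  then show ?thesis using assms by (simp add: mat_trace_def sum_distrib_left)
qed

lemma mat_adj_add:
  "A \<in> carrier_mat n m \<Longrightarrow> B \<in> carrier_mat n m \<Longrightarrow> mat_adj (A + B) = mat_adj A + mat_adj B"
  by (rule eq_matI) auto

lemma mat_adj_smult: "mat_adj (c \<cdot>\<^sub>m A) = cnj c \<cdot>\<^sub>m mat_adj A"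
  by (rule eq_matI) auto

lemma cinner_add_mat_mult:
  assumes "A \<in> carrier_mat n n" "B \<in> carrier_mat n n" "v \<in> carrier_vec n"
  shows "cinner v ((A + B) *\<^sub>v v) = cinner v (A *\<^sub>v v) + cinner v (B *\<^sub>v v)"
  using assms by (simp add: add_mult_distrib_mat_vec cinner_add_right)

lemma cinner_smult_mat_mult:
  assumes "A \<in> carrier_mat n n" "v \<in> carrier_vec n"
  shows "cinner v ((c \<cdot>\<^sub>m A) *\<^sub>v v) = c * cinner v (A *\<^sub>v v)"
proof -
  have "(c \<cdot>\<^sub>m A) *\<^sub>v v = c \<cdot>\<^sub>v (A *\<^sub>v v)" using assms by (intro eq_vecI) auto
  then show ?thesis by (simp add: cinner_smult_right)
qed

lemma hermitian_smult_real:
  "mat_adj A = A \<Longrightarrow> mat_adj (complex_of_real c \<cdot>\<^sub>m A) = complex_of_real c \<cdot>\<^sub>m A"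
  by (simp add: mat_adj_smult)

lemma Re_cinner_smult_real_nonneg:
  assumes "A \<in> carrier_mat n n" "v \<in> carrier_vec n" "0 \<le> c" "0 \<le> Re (cinner v (A *\<^sub>v v))"
  shows "0 \<le> Re (cinner v ((complex_of_real c \<cdot>\<^sub>m A) *\<^sub>v v))"
  using assms by (simp add: cinner_smult_mat_mult)

text \<open>Eigenvalue interlacing for a rank-one update, combined with concavity of \<open>x powr \<alpha>\<close>.\<close>

theorem tr_pow_ketbra_add:
  assumes \<sigma>: "\<sigma> \<in> carrier_mat n n" "mat_adj \<sigma> = \<sigma>"
    and psd: "\<And>v. v \<in> carrier_vec n \<Longrightarrow> 0 \<le> Re (cinner v (\<sigma> *\<^sub>v v))"
    and g: "g \<in> carrier_vec n" and \<alpha>: "0 < \<alpha>" "\<alpha> < 1"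
  shows "tr_pow \<alpha> \<sigma> \<le> tr_pow \<alpha> (ketbra g + \<sigma>)"
    and "tr_pow \<alpha> (ketbra g + \<sigma>) \<le> tr_pow \<alpha> \<sigma> + vnorm2 g powr \<alpha>"
proof -
  have gg: "ketbra g \<in> carrier_mat n n" using g by simp
  obtain U d where d: "spectral_decomp n \<sigma> U d"
    using hermitian_spectral_decomp[OF \<sigma>] by blast
  have "mat_adj (ketbra g + \<sigma>) = ketbra g + \<sigma>"
    using \<sigma> gg by (simp add: mat_adj_add mat_adj_ketbra)
  then obtain V r where r: "spectral_decomp n (ketbra g + \<sigma>) V r"
    using hermitian_spectral_decomp[of "ketbra g + \<sigma>" n] \<sigma> gg by auto
  have quad: "Re (cinner v ((ketbra g + \<sigma>) *\<^sub>v v)) = (cmod (cinner g v))\<^sup>2 + Re (cinner v (\<sigma> *\<^sub>v v))"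
    if "v \<in> carrier_vec n" for v
    using cinner_add_mat_mult[OF gg \<sigma>(1) that] Re_cinner_ketbra_mult[OF g that] by simp
  have "card {i. i < n \<and> t < d i} \<le> card {i. i < n \<and> t < r i} + card ({} :: unit set)" for t
    using quad by (intro card_eigenvalues_gt_le[OF d r]) auto
  moreover have "card {i. i < n \<and> t < r i} \<le> card {i. i < n \<and> t < d i} + card {()}" for t
    using quad g by (intro card_eigenvalues_gt_le[OF r d, of _ "\<lambda>_. g"]) auto
  moreover have "0 \<le> d i" if "i < n" for i by (rule spectral_decomp_nonneg[OF d psd that])
  ultimately have bounds: "(\<Sum>i<n. d i powr \<alpha>) \<le> (\<Sum>i<n. r i powr \<alpha>)"
    "(\<Sum>i<n. r i powr \<alpha>) \<le> (\<Sum>i<n. d i powr \<alpha>) + ((\<Sum>i<n. r i) - (\<Sum>i<n. d i)) powr \<alpha>"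
    using sum_powr_bounds_of_counts[of n d r \<alpha>] \<alpha> by simp_all
  have "complex_of_real (\<Sum>i<n. r i) = complex_of_real (vnorm2 g + (\<Sum>i<n. d i))"
    using mat_trace_spectral[OF r] mat_trace_spectral[OF d] mat_trace_add[OF gg \<sigma>(1)]
    by (simp add: mat_trace_ketbra)
  then have "(\<Sum>i<n. r i) - (\<Sum>i<n. d i) = vnorm2 g" by (simp only: of_real_eq_iff)
  then show "tr_pow \<alpha> \<sigma> \<le> tr_pow \<alpha> (ketbra g + \<sigma>)"
    and "tr_pow \<alpha> (ketbra g + \<sigma>) \<le> tr_pow \<alpha> \<sigma> + vnorm2 g powr \<alpha>"
    using bounds by (simp_all add: tr_pow_spectral[OF d] tr_pow_spectral[OF r])
qed

definition density_mat :: "nat \<Rightarrow> complex mat \<Rightarrow> bool" where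
  "density_mat n \<rho> \<longleftrightarrow> \<rho> \<in> carrier_mat n n \<and> mat_adj \<rho> = \<rho>
    \<and> (\<forall>v\<in>carrier_vec n. 0 \<le> Re (cinner v (\<rho> *\<^sub>v v))) \<and> mat_trace \<rho> = 1"

lemma density_mat_spectral_decomp:
  assumes "density_mat n \<omega>"
  obtains U w where "spectral_decomp n \<omega> U w" "\<And>k. k < n \<Longrightarrow> 0 \<le> w k" "(\<Sum>k<n. w k) = 1"
proof -
  obtain U w where d: "spectral_decomp n \<omega> U w"
    using hermitian_spectral_decomp[of \<omega> n] assms by (auto simp: density_mat_def)
  moreover have "0 \<le> w k" if "k < n" for k
    using spectral_decomp_nonneg[OF d _ that] assms by (simp add: density_mat_def)
  moreover have "(\<Sum>k<n. w k) = 1"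
    using mat_trace_spectral[OF d] assms by (metis density_mat_def of_real_eq_1_iff)
  ultimately show ?thesis using that by blast
qed

lemma tr_pow_density_mat_pos:
  assumes "density_mat n \<omega>"
  shows "0 < tr_pow \<alpha> \<omega>"
proof -
  obtain U w where d: "spectral_decomp n \<omega> U w" and w: "\<And>k. k < n \<Longrightarrow> 0 \<le> w k"
    and sum: "(\<Sum>k<n. w k) = 1"
    using density_mat_spectral_decomp[OF assms] by blast
  obtain k where "k < n" "w k \<noteq> 0" using sum by (metis lessThan_iff sum.neutral zero_neq_one)
  then have "0 < (\<Sum>i<n. w i powr \<alpha>)" using w by (intro sum_pos2[of _ k]) auto
  then show ?thesis by (simp add: tr_pow_spectral[OF d])
qed

lemma tr_pow_ketbra_add_density_mat:
  assumes \<omega>: "density_mat n \<omega>" and g: "g \<in> carrier_vec n" and \<mu>: "0 \<le> \<mu>"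
    and \<alpha>: "0 < \<alpha>" "\<alpha> < 1"
  shows "\<mu> powr \<alpha> * tr_pow \<alpha> \<omega> \<le> tr_pow \<alpha> (ketbra g + complex_of_real \<mu> \<cdot>\<^sub>m \<omega>)"
    and "tr_pow \<alpha> (ketbra g + complex_of_real \<mu> \<cdot>\<^sub>m \<omega>) \<le> vnorm2 g powr \<alpha> + \<mu> powr \<alpha> * tr_pow \<alpha> \<omega>"
proof -
  obtain U w where d: "spectral_decomp n \<omega> U w" and w: "\<And>k. k < n \<Longrightarrow> 0 \<le> w k"
    using density_mat_spectral_decomp[OF \<omega>] by blast
  have \<sigma>: "complex_of_real \<mu> \<cdot>\<^sub>m \<omega> \<in> carrier_mat n n"
    "mat_adj (complex_of_real \<mu> \<cdot>\<^sub>m \<omega>) = complex_of_real \<mu> \<cdot>\<^sub>m \<omega>"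
    "\<And>v. v \<in> carrier_vec n \<Longrightarrow> 0 \<le> Re (cinner v ((complex_of_real \<mu> \<cdot>\<^sub>m \<omega>) *\<^sub>v v))"
    using \<omega> \<mu> by (auto simp: density_mat_def hermitian_smult_real intro: Re_cinner_smult_real_nonneg)
  have "tr_pow \<alpha> (complex_of_real \<mu> \<cdot>\<^sub>m \<omega>) = \<mu> powr \<alpha> * tr_pow \<alpha> \<omega>"
    by (rule tr_pow_smult[OF d w \<mu>])
  then show "\<mu> powr \<alpha> * tr_pow \<alpha> \<omega> \<le> tr_pow \<alpha> (ketbra g + complex_of_real \<mu> \<cdot>\<^sub>m \<omega>)"
    and "tr_pow \<alpha> (ketbra g + complex_of_real \<mu> \<cdot>\<^sub>m \<omega>) \<le> vnorm2 g powr \<alpha> + \<mu> powr \<alpha> * tr_pow \<alpha> \<omega>"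
    using tr_pow_ketbra_add[OF \<sigma> g \<alpha>] by simp_all
qed

section \<open>Tensor products and the partial trace\<close>

lemma sum_lessThan_mult_nat:
  fixes f :: "nat \<Rightarrow> 'a :: comm_monoid_add"
  shows "(\<Sum>k<n * m. f k) = (\<Sum>i<n. \<Sum>j<m. f (i * m + j))"
proof (induction n)
  case (Suc n)
  have "(\<Sum>k<Suc n * m. f k) = (\<Sum>k<n * m. f k) + (\<Sum>k\<in>{n * m..<n * m + m}. f k)"
    by (simp add: atLeast0LessThan[symmetric] sum.atLeastLessThan_concat add.commute)
  also have "(\<Sum>k\<in>{n * m..<n * m + m}. f k) = (\<Sum>j<m. f (n * m + j))"
    using sum.shift_bounds_nat_ivl[of f 0 "n * m" m] by (simp add: atLeast0LessThan add.commute)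
  finally show ?case using Suc by simp
qed simp

lemma index_pair_less:
  fixes i j n m :: nat
  assumes "i < n" "j < m"
  shows "i * m + j < n * m"
proof -
  have "i * m + j < (i + 1) * m" using assms by simp
  also have "\<dots> \<le> n * m" using assms by (intro mult_right_mono) auto
  finally show ?thesis .
qed

lemma ptrace_B_outer_carrier [simp]: "ptrace_B_outer n m u v \<in> carrier_mat n n"
  and dim_row_ptrace_B_outer [simp]: "dim_row (ptrace_B_outer n m u v) = n"
  and dim_col_ptrace_B_outer [simp]: "dim_col (ptrace_B_outer n m u v) = n"
  by (simp_all add: ptrace_B_outer_def)

lemma index_ptrace_B_outer:
  "i < n \<Longrightarrow> i' < n \<Longrightarrow> ptrace_B_outer n m u v $$ (i, i') = (\<Sum>j<m. u $ (i * m + j) * cnj (v $ (i' * m + j)))"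
  by (simp add: ptrace_B_outer_def)

lemma mat_adj_ptrace_B_outer: "mat_adj (ptrace_B_outer n m u u) = ptrace_B_outer n m u u"
  by (rule eq_matI) (auto simp: index_ptrace_B_outer mult.commute)

lemma mat_trace_ptrace_B_outer:
  assumes "u \<in> carrier_vec (n * m)"
  shows "mat_trace (ptrace_B_outer n m u u) = complex_of_real (vnorm2 u)"
proof -
  have "mat_trace (ptrace_B_outer n m u u) = (\<Sum>i<n. \<Sum>j<m. u $ (i * m + j) * cnj (u $ (i * m + j)))"
    by (simp add: mat_trace_def index_ptrace_B_outer)
  also have "\<dots> = (\<Sum>k<n * m. u $ k * cnj (u $ k))" by (rule sum_lessThan_mult_nat[symmetric])
  also have "\<dots> = cinner u u" using assms by (simp add: cinner_def mult.commute)
  finally show ?thesis by (simp add: cinner_self)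
qed

text \<open>\<open>\<langle>v, tr\<^sub>B |u\<rangle>\<langle>u| v\<rangle> = \<Sum>\<^sub>j |\<langle>v \<otimes> e\<^sub>j, u\<rangle>|\<^sup>2\<close>.\<close>

lemma Re_cinner_ptrace_B_outer_nonneg:
  assumes v: "v \<in> carrier_vec n"
  shows "0 \<le> Re (cinner v (ptrace_B_outer n m u u *\<^sub>v v))"
proof -
  define s where "s j = (\<Sum>i<n. cnj (v $ i) * u $ (i * m + j))" for j
  have "cinner v (ptrace_B_outer n m u u *\<^sub>v v)
      = (\<Sum>i<n. \<Sum>i'<n. \<Sum>j<m. cnj (v $ i) * u $ (i * m + j) * (cnj (u $ (i' * m + j)) * v $ i'))"
    using v by (simp add: cinner_def scalar_prod_def atLeast0LessThan index_ptrace_B_outer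
        sum_distrib_left sum_distrib_right mult_ac)
  also have "\<dots> = (\<Sum>j<m. \<Sum>i<n. \<Sum>i'<n. cnj (v $ i) * u $ (i * m + j) * (cnj (u $ (i' * m + j)) * v $ i'))"
    by (simp add: sum.swap[of _ "{..<m}"])
  also have "\<dots> = (\<Sum>j<m. s j * cnj (s j))"
    by (simp add: s_def sum_distrib_left sum_distrib_right mult_ac)
  finally show ?thesis by (simp add: Re_sum sum_nonneg)
qed

lemma ptrace_B_outer_smult:
  assumes "u \<in> carrier_vec (n * m)" "v \<in> carrier_vec (n * m)"
  shows "ptrace_B_outer n m (a \<cdot>\<^sub>v u) (b \<cdot>\<^sub>v v) = (a * cnj b) \<cdot>\<^sub>m ptrace_B_outer n m u v"
  using assms index_pair_less[of _ n _ m]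
  by (intro eq_matI) (auto simp: index_ptrace_B_outer sum_distrib_left mult_ac intro!: sum.cong)

lemma dim_vec_vtensor [simp]: "dim_vec (vtensor a b) = dim_vec a * dim_vec b"
  by (simp add: vtensor_def)

lemma vtensor_carrier [simp]: "a \<in> carrier_vec n \<Longrightarrow> b \<in> carrier_vec m \<Longrightarrow> vtensor a b \<in> carrier_vec (n * m)"
  by (simp add: vtensor_def)

lemma index_vtensor:
  assumes "a \<in> carrier_vec n" "b \<in> carrier_vec m" "i < n" "j < m"
  shows "vtensor a b $ (i * m + j) = a $ i * b $ j"
  using assms index_pair_less[of i n j m] by (simp add: vtensor_def)

lemma vtensor_add_smult_left:
  assumes "a \<in> carrier_vec n" "x \<in> carrier_vec n" "b \<in> carrier_vec m"
  shows "vtensor (a + c \<cdot>\<^sub>v x) b = vtensor a b + c \<cdot>\<^sub>v vtensor x b"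
proof (rule eq_vecI)
  fix k assume "k < dim_vec (vtensor a b + c \<cdot>\<^sub>v vtensor x b)"
  then have "k < n * m" using assms by simp
  then have "k div m < n" by (simp add: less_mult_imp_div_less)
  with \<open>k < n * m\<close> show "vtensor (a + c \<cdot>\<^sub>v x) b $ k = (vtensor a b + c \<cdot>\<^sub>v vtensor x b) $ k"
    using assms by (simp add: vtensor_def algebra_simps)
qed (use assms in simp)

lemma vnorm2_vtensor:
  assumes a: "a \<in> carrier_vec n" and b: "b \<in> carrier_vec m"
  shows "vnorm2 (vtensor a b) = vnorm2 a * vnorm2 b"
proof -
  have "vnorm2 (vtensor a b) = (\<Sum>i<n. \<Sum>j<m. (cmod (a $ i))\<^sup>2 * (cmod (b $ j))\<^sup>2)"
    using a b by (simp add: vnorm2_eq_sum sum_lessThan_mult_nat index_vtensor norm_mult power_mult_distrib)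
  also have "\<dots> = vnorm2 a * vnorm2 b"
    using a b by (simp add: vnorm2_eq_sum sum_product)
  finally show ?thesis .
qed

lemma vnorm2_add_smult:
  assumes "u \<in> carrier_vec n" "v \<in> carrier_vec n"
  shows "vnorm2 (u + complex_of_real c \<cdot>\<^sub>v v) = vnorm2 u + c\<^sup>2 * vnorm2 v + 2 * c * Re (cinner u v)"
proof -
  let ?c = "complex_of_real c"
  have du: "dim_vec u = n" and dv: "dim_vec v = n" using assms by auto
  have "vnorm2 (u + ?c \<cdot>\<^sub>v v)
      = Re (cinner u u + ?c * cinner u v + cnj ?c * cinner v u + cnj ?c * ?c * cinner v v)"
    unfolding vnorm2_def using du dv
    by (simp add: cinner_add_left cinner_add_right cinner_smult_left cinner_smult_right algebra_simps)
  moreover have "cinner v u = cnj (cinner u v)" using du dv by (intro cinner_commute) simp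
  ultimately show ?thesis by (simp add: vnorm2_def power2_eq_square)
qed

lemma contract_B_carrier [simp]: "contract_B n b w \<in> carrier_vec n"
  by (simp add: contract_B_def)

lemma contract_B_sub_vtensor_contract_B:
  assumes b: "b \<in> carrier_vec m" "vnorm2 b = 1" and w: "w \<in> carrier_vec (n * m)"
  shows "contract_B n b (w - vtensor (contract_B n b w) b) = 0\<^sub>v n"
proof (rule eq_vecI)
  fix i assume "i < dim_vec (0\<^sub>v n :: complex vec)"
  then have i: "i < n" by simp
  define c where "c = contract_B n b w"
  have c: "c \<in> carrier_vec n" "c $ i = (\<Sum>j<m. cnj (b $ j) * w $ (i * m + j))"
    using b i by (simp_all add: c_def contract_B_def)
  have bb: "(\<Sum>j<m. cnj (b $ j) * b $ j) = 1"
    using cinner_self[of b] b by (simp add: cinner_def)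
  have "contract_B n b (w - vtensor c b) $ i = (\<Sum>j<m. cnj (b $ j) * (w - vtensor c b) $ (i * m + j))"
    using b i by (simp add: contract_B_def)
  also have "\<dots> = (\<Sum>j<m. cnj (b $ j) * w $ (i * m + j) - c $ i * (cnj (b $ j) * b $ j))"
  proof (intro sum.cong refl)
    fix j assume "j \<in> {..<m}"
    then have j: "j < m" by simp
    then have "(w - vtensor c b) $ (i * m + j) = w $ (i * m + j) - c $ i * b $ j"
      using b w c index_pair_less[OF i j] by (simp add: index_vtensor[OF c(1) b(1) i j])
    then show "cnj (b $ j) * (w - vtensor c b) $ (i * m + j) = cnj (b $ j) * w $ (i * m + j) - c $ i * (cnj (b $ j) * b $ j)"
      by (simp add: right_diff_distrib mult_ac)
  qed
  also have "\<dots> = 0"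
    by (simp add: sum_subtractf sum_distrib_left[symmetric] bb c(2))
  finally show "contract_B n b (w - vtensor (contract_B n b w) b) $ i = 0\<^sub>v n $ i"
    using i by (simp add: c_def)
qed simp

text \<open>Since \<open>y\<close> has no component along \<open>b\<close>, the cross terms vanish in the partial trace.\<close>

lemma ptrace_B_outer_vtensor_add:
  assumes a: "a \<in> carrier_vec n" and b: "b \<in> carrier_vec m" "vnorm2 b = 1"
    and y: "y \<in> carrier_vec (n * m)" and orth: "contract_B n b y = 0\<^sub>v n"
  shows "ptrace_B_outer n m (vtensor a b + y) (vtensor a b + y) = ketbra a + ptrace_B_outer n m y y"
proof (rule eq_matI)
  fix i i' assume "i < dim_row (ketbra a + ptrace_B_outer n m y y)" "i' < dim_col (ketbra a + ptrace_B_outer n m y y)"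
  then have ii: "i < n" "i' < n" using a by auto
  have bb: "(\<Sum>j<m. cnj (b $ j) * b $ j) = 1"
    using cinner_self[of b] b by (simp add: cinner_def)
  have by0: "(\<Sum>j<m. cnj (b $ j) * y $ (k * m + j)) = 0" if "k < n" for k
    using arg_cong[OF orth, of "\<lambda>v. v $ k"] that b by (simp add: contract_B_def)
  have entry: "(vtensor a b + y) $ (k * m + j) = a $ k * b $ j + y $ (k * m + j)" if "k < n" "j < m" for k j
    using a b y index_pair_less[OF that] by (simp add: index_vtensor[OF a b(1) that])
  have "ptrace_B_outer n m (vtensor a b + y) (vtensor a b + y) $$ (i, i')
      = (\<Sum>j<m. (a $ i * b $ j + y $ (i * m + j)) * cnj (a $ i' * b $ j + y $ (i' * m + j)))"
    using ii by (auto simp: index_ptrace_B_outer entry intro!: sum.cong)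
  also have "\<dots> = (\<Sum>j<m. a $ i * cnj (a $ i') * (cnj (b $ j) * b $ j)
          + a $ i * cnj (cnj (b $ j) * y $ (i' * m + j))
          + cnj (a $ i') * (cnj (b $ j) * y $ (i * m + j))
          + y $ (i * m + j) * cnj (y $ (i' * m + j)))"
    by (intro sum.cong refl) (simp add: algebra_simps)
  also have "\<dots> = a $ i * cnj (a $ i') * (\<Sum>j<m. cnj (b $ j) * b $ j)
      + a $ i * cnj (\<Sum>j<m. cnj (b $ j) * y $ (i' * m + j))
      + cnj (a $ i') * (\<Sum>j<m. cnj (b $ j) * y $ (i * m + j))
      + (\<Sum>j<m. y $ (i * m + j) * cnj (y $ (i' * m + j)))"
    by (simp add: sum.distrib sum_distrib_left)
  also have "\<dots> = (ketbra a + ptrace_B_outer n m y y) $$ (i, i')"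
    using a ii by (simp add: bb by0 index_ptrace_B_outer)
  finally show "ptrace_B_outer n m (vtensor a b + y) (vtensor a b + y) $$ (i, i')
      = (ketbra a + ptrace_B_outer n m y y) $$ (i, i')" .
qed (use a in auto)

lemma contract_B_smult:
  assumes "y \<in> carrier_vec (n * m)" "b \<in> carrier_vec m"
  shows "contract_B n b (c \<cdot>\<^sub>v y) = c \<cdot>\<^sub>v contract_B n b y"
  using assms index_pair_less[of _ n _ m]
  by (intro eq_vecI) (auto simp: contract_B_def sum_distrib_left mult_ac intro!: sum.cong)

lemma ptrace_B_outer_superposition:
  assumes a: "a \<in> carrier_vec n" and b: "b \<in> carrier_vec m" "vnorm2 b = 1"
    and \<phi>: "\<phi> \<in> carrier_vec (n * m)"
    and x: "contract_B n b \<phi> = x" and y: "\<phi> - vtensor x b = y"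
  shows "ptrace_B_outer n m (vtensor a b + c \<cdot>\<^sub>v \<phi>) (vtensor a b + c \<cdot>\<^sub>v \<phi>)
    = ketbra (a + c \<cdot>\<^sub>v x) + (c * cnj c) \<cdot>\<^sub>m ptrace_B_outer n m y y"
proof -
  have xc: "x \<in> carrier_vec n" using x by auto
  have yc: "y \<in> carrier_vec (n * m)" using y \<phi> xc b by auto
  have "vtensor a b + c \<cdot>\<^sub>v \<phi> = vtensor (a + c \<cdot>\<^sub>v x) b + c \<cdot>\<^sub>v y"
    using a b xc \<phi> by (intro eq_vecI) (auto simp: vtensor_add_smult_left y[symmetric] algebra_simps)
  moreover have "contract_B n b (c \<cdot>\<^sub>v y) = 0\<^sub>v n"
    using contract_B_sub_vtensor_contract_B[OF b \<phi>] x y yc b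
    by (auto simp: contract_B_smult intro!: eq_vecI)
  ultimately show ?thesis
    using ptrace_B_outer_vtensor_add[of "a + c \<cdot>\<^sub>v x" n b m "c \<cdot>\<^sub>v y"] ptrace_B_outer_smult[OF yc yc]
      a xc b yc by simp
qed

lemma density_mat_normalized_ptrace:
  assumes y: "y \<in> carrier_vec (n * m)" "y \<noteq> 0\<^sub>v (n * m)"
  shows "density_mat n (complex_of_real (1 / vnorm2 y) \<cdot>\<^sub>m ptrace_B_outer n m y y)"
proof -
  let ?c = "complex_of_real (1 / vnorm2 y)" and ?P = "ptrace_B_outer n m y y"
  have "0 < vnorm2 y" using vnorm2_nonneg[of y] vnorm2_eq_0_iff[OF y(1)] y(2) by (simp add: less_le)
  then have "mat_trace (?c \<cdot>\<^sub>m ?P) = 1"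
    by (simp add: mat_trace_smult[OF ptrace_B_outer_carrier] mat_trace_ptrace_B_outer[OF y(1)]
        flip: of_real_mult)
  moreover have "mat_adj (?c \<cdot>\<^sub>m ?P) = ?c \<cdot>\<^sub>m ?P"
    by (rule hermitian_smult_real[OF mat_adj_ptrace_B_outer])
  moreover have "0 \<le> Re (cinner v ((?c \<cdot>\<^sub>m ?P) *\<^sub>v v))" if "v \<in> carrier_vec n" for v
    using \<open>0 < vnorm2 y\<close> Re_cinner_ptrace_B_outer_nonneg[OF that]
    by (intro Re_cinner_smult_real_nonneg[OF ptrace_B_outer_carrier that]) simp_all
  ultimately show ?thesis by (simp add: density_mat_def)
qed

lemma vnorm2_superposition:
  assumes a: "a \<in> carrier_vec n" and b: "b \<in> carrier_vec m" "vnorm2 b = 1"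
    and \<phi>: "\<phi> \<in> carrier_vec (n * m)"
    and x: "contract_B n b \<phi> = x" and y: "\<phi> - vtensor x b = y"
  shows "vnorm2 (vtensor a b + complex_of_real \<epsilon> \<cdot>\<^sub>v \<phi>)
    = vnorm2 (a + complex_of_real \<epsilon> \<cdot>\<^sub>v x) + \<epsilon>\<^sup>2 * vnorm2 y"
proof -
  have xc: "x \<in> carrier_vec n" using x by auto
  have yc: "y \<in> carrier_vec (n * m)" using y \<phi> xc b by auto
  have "complex_of_real (vnorm2 (vtensor a b + complex_of_real \<epsilon> \<cdot>\<^sub>v \<phi>))
      = mat_trace (ketbra (a + complex_of_real \<epsilon> \<cdot>\<^sub>v x) + complex_of_real (\<epsilon>\<^sup>2) \<cdot>\<^sub>m ptrace_B_outer n m y y)"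
    using mat_trace_ptrace_B_outer[of "vtensor a b + complex_of_real \<epsilon> \<cdot>\<^sub>v \<phi>" n m]
      ptrace_B_outer_superposition[OF a b \<phi> x y, of "complex_of_real \<epsilon>"] a b \<phi>
    by (simp add: power2_eq_square)
  also have "\<dots> = complex_of_real (vnorm2 (a + complex_of_real \<epsilon> \<cdot>\<^sub>v x) + \<epsilon>\<^sup>2 * vnorm2 y)"
    using a xc yc by (simp add: mat_trace_add[of _ n] mat_trace_smult[of _ n] mat_trace_ketbra
        mat_trace_ptrace_B_outer)
  finally show ?thesis by (simp only: of_real_eq_iff)
qed

lemma reduced_state_decomp:
  assumes a0: "a0 \<in> carrier_vec n" and b0: "b0 \<in> carrier_vec m" and \<phi>: "\<phi> \<in> carrier_vec (n * m)"
    and norms: "vnorm2 a0 = 1" "vnorm2 b0 = 1" "vnorm2 \<phi> = 1"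
    and x: "contract_B n b0 \<phi> = x" and y: "\<phi> - vtensor x b0 = y" and y0: "y \<noteq> 0\<^sub>v (n * m)"
    and \<epsilon>: "0 < \<epsilon>"
    and N: "N = 1 + \<epsilon>^2 + 2 * \<epsilon> * Re (cinner (vtensor a0 b0) \<phi>)"
    and \<psi>: "\<psi> = complex_of_real (1 / sqrt N) \<cdot>\<^sub>v (vtensor a0 b0 + complex_of_real \<epsilon> \<cdot>\<^sub>v \<phi>)"
    and \<mu>: "\<mu> = \<epsilon>^2 * vnorm2 y / N"
    and \<omega>: "\<omega> = complex_of_real (1 / vnorm2 y) \<cdot>\<^sub>m ptrace_B_outer n m y y"
  shows "\<exists>g\<in>carrier_vec n. ptrace_B_outer n m \<psi> \<psi> = ketbra g + complex_of_real \<mu> \<cdot>\<^sub>m \<omega>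
    \<and> vnorm2 g = 1 - \<mu> \<and> 0 < \<mu>"
proof -
  define a where "a = a0 + complex_of_real \<epsilon> \<cdot>\<^sub>v x"
  define w where "w = vtensor a0 b0 + complex_of_real \<epsilon> \<cdot>\<^sub>v \<phi>"
  define g where "g = complex_of_real (1 / sqrt N) \<cdot>\<^sub>v a"
  have ac: "a \<in> carrier_vec n" using a0 x by (auto simp: a_def)
  have yc: "y \<in> carrier_vec (n * m)" using y \<phi> x b0 by auto
  have ny: "0 < vnorm2 y" using vnorm2_nonneg[of y] vnorm2_eq_0_iff[OF yc] y0 by (simp add: less_le)
  have "N = vnorm2 w"
    using vnorm2_add_smult[OF vtensor_carrier[OF a0 b0] \<phi>, of \<epsilon>] vnorm2_vtensor[OF a0 b0] norms N
    by (simp add: w_def)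
  then have Na: "N = vnorm2 a + \<epsilon>^2 * vnorm2 y"
    using vnorm2_superposition[OF a0 b0 norms(2) \<phi> x y] by (simp add: w_def a_def)
  then have N0: "0 < N" using ny \<epsilon> vnorm2_nonneg[of a] by (simp add: add_nonneg_pos)
  have sqrtN: "complex_of_real (1 / sqrt N) * cnj (complex_of_real (1 / sqrt N)) = complex_of_real (1 / N)"
    using N0 by (simp flip: of_real_mult)
  have wc: "w \<in> carrier_vec (n * m)" using a0 b0 \<phi> by (simp add: w_def)
  have "ptrace_B_outer n m \<psi> \<psi> = complex_of_real (1 / N) \<cdot>\<^sub>m ptrace_B_outer n m w w"
    unfolding \<psi> w_def[symmetric] sqrtN[symmetric] by (rule ptrace_B_outer_smult[OF wc wc])
  also have "\<dots> = complex_of_real (1 / N) \<cdot>\<^sub>m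
      (ketbra a + complex_of_real (\<epsilon>^2) \<cdot>\<^sub>m ptrace_B_outer n m y y)"
    using ptrace_B_outer_superposition[OF a0 b0 norms(2) \<phi> x y, of "complex_of_real \<epsilon>"]
    by (simp add: w_def a_def power2_eq_square)
  also have "\<dots> = ketbra g + complex_of_real \<mu> \<cdot>\<^sub>m \<omega>"
  proof -
    have "ketbra g = complex_of_real (1 / N) \<cdot>\<^sub>m ketbra a" by (simp only: g_def ketbra_smult sqrtN)
    moreover have "dim_vec a = n" using ac by simp
    ultimately show ?thesis
      using ny N0 by (intro eq_matI) (auto simp: ketbra_def \<omega> \<mu> field_simps)
  qed
  finally have "ptrace_B_outer n m \<psi> \<psi> = ketbra g + complex_of_real \<mu> \<cdot>\<^sub>m \<omega>" .
  moreover have "vnorm2 g = 1 - \<mu>"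
  proof -
    have "vnorm2 g = vnorm2 a / N" using N0 by (simp add: g_def vnorm2_smult norm_divide power_divide)
    then show ?thesis using Na N0 by (simp add: \<mu> field_simps)
  qed
  moreover have "g \<in> carrier_vec n" using ac by (simp add: g_def)
  moreover have "0 < \<mu>" using ny N0 \<epsilon> by (simp add: \<mu>)
  ultimately show ?thesis by blast
qed

lemma renyi_bounds_of_tr_pow_bounds:
  assumes \<mu>: "0 < \<mu>" and \<omega>: "0 < tr_pow \<alpha> \<omega>" and \<alpha>: "\<alpha> < 1"
    and lower: "\<mu> powr \<alpha> * tr_pow \<alpha> \<omega> \<le> tr_pow \<alpha> \<rho>"
    and upper: "tr_pow \<alpha> \<rho> \<le> (1 - \<mu>) powr \<alpha> + \<mu> powr \<alpha> * tr_pow \<alpha> \<omega>"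
  shows "renyi \<alpha> \<omega> + \<alpha> / (1 - \<alpha>) * ln \<mu> \<le> renyi \<alpha> \<rho>"
    and "renyi \<alpha> \<rho> \<le> ln ((1 - \<mu>) powr \<alpha> + \<mu> powr \<alpha> * exp ((1 - \<alpha>) * renyi \<alpha> \<omega>)) / (1 - \<alpha>)"
proof -
  have pos: "0 < \<mu> powr \<alpha> * tr_pow \<alpha> \<omega>" using \<mu> \<omega> by simp
  have "ln (\<mu> powr \<alpha> * tr_pow \<alpha> \<omega>) \<le> ln (tr_pow \<alpha> \<rho>)"
    using lower pos by simp
  moreover have "ln (\<mu> powr \<alpha> * tr_pow \<alpha> \<omega>) = \<alpha> * ln \<mu> + ln (tr_pow \<alpha> \<omega>)"
    using \<mu> \<omega> by (simp add: ln_mult ln_powr)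
  ultimately have "(ln (tr_pow \<alpha> \<omega>) + \<alpha> * ln \<mu>) / (1 - \<alpha>) \<le> ln (tr_pow \<alpha> \<rho>) / (1 - \<alpha>)"
    using \<alpha> by (intro divide_right_mono) auto
  then show "renyi \<alpha> \<omega> + \<alpha> / (1 - \<alpha>) * ln \<mu> \<le> renyi \<alpha> \<rho>"
    using \<alpha> by (simp add: renyi_def add_divide_distrib)
  have "exp ((1 - \<alpha>) * renyi \<alpha> \<omega>) = tr_pow \<alpha> \<omega>"
    using \<alpha> \<omega> by (simp add: renyi_def)
  moreover have "ln (tr_pow \<alpha> \<rho>) \<le> ln ((1 - \<mu>) powr \<alpha> + \<mu> powr \<alpha> * tr_pow \<alpha> \<omega>)"
    using upper pos lower by simp
  ultimately show "renyi \<alpha> \<rho> \<le> ln ((1 - \<mu>) powr \<alpha> + \<mu> powr \<alpha> * exp ((1 - \<alpha>) * renyi \<alpha> \<omega>)) / (1 - \<alpha>)"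
    using \<alpha> by (simp add: renyi_def divide_right_mono)
qed

theorem mainTheorem3:
  fixes n m :: nat and a0 b0 \<phi> :: "complex vec" and \<epsilon> \<alpha> :: real
  assumes "n > 0" and "m > 0"
    and "a0 \<in> carrier_vec n" and "b0 \<in> carrier_vec m" and "\<phi> \<in> carrier_vec (n * m)"
    and "vnorm2 a0 = 1" and "vnorm2 b0 = 1" and "vnorm2 \<phi> = 1"
    and "contract_B n b0 \<phi> = x"
    and "\<phi> - vtensor x b0 = y"
    and "y \<noteq> 0\<^sub>v (n * m)"
    and "0 < \<epsilon>" and "\<epsilon> < 1"
    and "\<N> = 1 + \<epsilon>^2 + 2 * \<epsilon> * Re (cinner (vtensor a0 b0) \<phi>)"
    and "\<psi> = (complex_of_real (1 / sqrt \<N>)) \<cdot>\<^sub>v (vtensor a0 b0 + complex_of_real \<epsilon> \<cdot>\<^sub>v \<phi>)"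
    and "\<rho>A = ptrace_B_outer n m \<psi> \<psi>"
    and "\<mu> = \<epsilon>^2 * vnorm2 y / \<N>"
    and "\<omega> = (complex_of_real (1 / vnorm2 y)) \<cdot>\<^sub>m ptrace_B_outer n m y y"
    and "0 < \<alpha>" and "\<alpha> < 1"
  shows "\<mu> powr \<alpha> * tr_pow \<alpha> \<omega> \<le> tr_pow \<alpha> \<rho>A
       \<and> tr_pow \<alpha> \<rho>A \<le> (1 - \<mu>) powr \<alpha> + \<mu> powr \<alpha> * tr_pow \<alpha> \<omega>
       \<and> renyi \<alpha> \<omega> + \<alpha> / (1 - \<alpha>) * ln \<mu> \<le> renyi \<alpha> \<rho>A
       \<and> renyi \<alpha> \<rho>A \<le> ln ((1 - \<mu>) powr \<alpha> + \<mu> powr \<alpha> * exp ((1 - \<alpha>) * renyi \<alpha> \<omega>)) / (1 - \<alpha>)"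
proof -
  obtain g where g: "g \<in> carrier_vec n" and \<rho>: "\<rho>A = ketbra g + complex_of_real \<mu> \<cdot>\<^sub>m \<omega>"
    and g_norm: "vnorm2 g = 1 - \<mu>" and \<mu>: "0 < \<mu>"
    using reduced_state_decomp[OF assms(3-12) assms(14,15,17,18)] assms(16) by auto
  have y: "y \<in> carrier_vec (n * m)" using assms(3-5,9,10) by auto
  have \<omega>: "density_mat n \<omega>"
    unfolding assms(18) by (rule density_mat_normalized_ptrace[OF y assms(11)])
  have lower: "\<mu> powr \<alpha> * tr_pow \<alpha> \<omega> \<le> tr_pow \<alpha> \<rho>A"
    and upper: "tr_pow \<alpha> \<rho>A \<le> (1 - \<mu>) powr \<alpha> + \<mu> powr \<alpha> * tr_pow \<alpha> \<omega>"
    using tr_pow_ketbra_add_density_mat[OF \<omega> g _ assms(19,20), of \<mu>] \<mu> by (simp_all add: \<rho> g_norm)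
  show ?thesis
    using lower upper renyi_bounds_of_tr_pow_bounds[OF \<mu> tr_pow_density_mat_pos[OF \<omega>] assms(20) lower upper]
    by blast
qed

end
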